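(* Fix $t_0<t_1$ and a family of domains $\Omega_\tau\subset\mathbb{R}^d$, $\tau\in(t_0,t_1)$. For each $\tau$ let $V(\Omega_\tau)$, $H(\Omega_\tau)$ be real Hilbert spaces of functions on $\Omega_\tau$ with duals $V^\star(\Omega_\tau)$, $H^\star(\Omega_\tau)$ (realized as function spaces on $\Omega_\tau$), duality pairings $\langle\cdot,\cdot\rangle_{\Omega_\tau}$ and $(\cdot,\cdot)_{\Omega_\tau}$. Let $A:V(\Omega_\tau)\to V^\star(\Omega_\tau)$ be linear with $\langle Au,u\rangle_{\Omega_\tau}\ge\underline{c}_A\|u\|^2_{V(\Omega_\tau)}$, $\|Au\|_{V^\star(\Omega_\tau)}\le\overline{c}_A\|u\|_{V(\Omega_\tau)}$, $\overline{c}_A\ge\underline{c}_A>0$, and $B:V(\Omega_\tau)\to H(\Omega_\tau)$ linear, surjective, with $\|Bu\|_{H(\Omega_\tau)}\le\overline{c}_B\|u\|_{V(\Omega_\tau)}$, all constants uniform in $\tau$. Let $f\in\bigcap_{\tau}V^\star(\Omega_\tau)$. Consider the equality-constrained cones $K(\Omega_\tau)=\{u\in V(\Omega_\tau): Bu=0\}$ and $K^\star(\Omega_\tau)=H^\star(\Omega_\tau)$, the objective $\mathcal{E}(u;\Omega_\tau)=\langle\frac12Au-f,u\rangle_{\Omega_\tau}$ and Lagrangian $\mathcal{L}(u,\lambda;\Omega_\tau)=\mathcal{E}(u;\Omega_\tau)-(\lambda,Bu)_{\Omega_\tau}$ on $V(\Omega_\tau)\times H^\star(\Omega_\tau)$.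 Let $u_\tau$ be the minimizer of $\mathcal{E}(\cdot;\Omega_\tau)$ over $K(\Omega_\tau)$ and $(u_\tau,\lambda_\tau)$ the saddle point of $\mathcal{L}(\cdot,\cdot;\Omega_\tau)$ on $V(\Omega_\tau)\times H^\star(\Omega_\tau)$. Fix $t\in(t_0,t_1)$ and let $\phi_s,\phi_s^{-1}\in C^1([t_0-t,t_1-t];W^{1,\infty}_{\rm loc}(\mathbb{R}^d;\mathbb{R}^d))$ be mutually inverse with $\Omega_{t+s}=\phi_s(\Omega_t)$. Assume, uniformly in $s\in(t_0-t,t_1-t)$ and $t\in(t_0,t_1)$: $v\mapsto v\circ\phi_s$ is a bijection $V(\Omega_{t+s})\to V(\Omega_t)$, $V^\star(\Omega_{t+s})\to V^\star(\Omega_t)$, $H(\Omega_{t+s})\to H(\Omega_t)$, $H^\star(\Omega_{t+s})\to H^\star(\Omega_t)$; $\langle Av,\chi\rangle_{\Omega_{t+s}}=\langle[A+sA^1+A^2_s](v\circ\phi_s),\chi\circ\phi_s\rangle_{\Omega_t}$ with bounded linear $A^1,A^2_s$ and $\|A^2_su\|_{V^\star(\Omega_t)}\le o(s)\|u\|_{V(\Omega_t)}$; $(\mu,Bv)_{\Omega_{t+s}}=(\mu\circ\phi_s,[B+sB^1+B^2_s](v\circ\phi_s))_{\Omega_t}$ with bounded linear $B^1,B^2_s:V(\Omega_t)\to H(\Omega_t)$, $B+sB^1+B^2_s$ surjective and $\|B^2_su\|_{H(\Omega_t)}\le o(s)\|u\|_{V(\Omega_t)}$; $\langle f,v\rangle_{\Omega_{t+s}}=\langle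 f+sf^1+f^2_s,v\circ\phi_s\rangle_{\Omega_t}$ with $f^1,f^2_s\in V^\star(\Omega_t)$, $\|f^2_s\|_{V^\star(\Omega_t)}=o(s)$ (here $o(s)$ denotes nonnegative functions that are $o(s)$ as $s\to0$). Then $\mu\mapsto\mu\circ\phi_s$ is a bijection $K^\star(\Omega_{t+s})\to K^\star(\Omega_t)$, and $$\lim_{s\to0}\frac{\mathcal{E}(u_{t+s};\Omega_{t+s})-\mathcal{E}(u_t;\Omega_t)}{s}=\langle\tfrac12A^1u_t-f^1,u_t\rangle_{\Omega_t}-(\lambda_t,B^1u_t)_{\Omega_t}.$$
   Context: $v\circ\phi_s$ denotes composition of a function on $\Omega_{t+s}$ with $\phi_s:\Omega_t\to\Omega_{t+s}$. *)

theory Defs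
  imports "HOL-Analysis.Analysis"
begin

text \<open>Function spaces on a domain are modelled as sets of real-valued functions on
  the ambient space (total functions, vanishing outside the domain), with pointwise
  linear operations.\<close>

definition fsubspace :: "('x \<Rightarrow> real) set \<Rightarrow> bool" where
  "fsubspace S \<longleftrightarrow> (\<lambda>x. 0) \<in> S \<and> (\<forall>u\<in>S. \<forall>v\<in>S. (\<lambda>x. u x + v x) \<in> S)
     \<and> (\<forall>c. \<forall>u\<in>S. (\<lambda>x. c * u x) \<in> S)"

definition supported_in :: "'x set \<Rightarrow> ('x \<Rightarrow> real) set \<Rightarrow> bool" where
  "supported_in \<Omega> S \<longleftrightarrow> (\<forall>u\<in>S. \<forall>x. x \<notin> \<Omega> \<longrightarrow> u x = 0)"

definition fnorm :: "(('x \<Rightarrow> real) \<Rightarrow> ('x \<Rightarrow> real) \<Rightarrow> real) \<Rightarrow> ('x \<Rightarrow> real) \<Rightarrow> real" where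
  "fnorm ip u = sqrt (ip u u)"

definition hilbert_fspace :: "('x \<Rightarrow> real) set \<Rightarrow> (('x \<Rightarrow> real) \<Rightarrow> ('x \<Rightarrow> real) \<Rightarrow> real) \<Rightarrow> bool" where
  "hilbert_fspace S ip \<longleftrightarrow> fsubspace S
     \<and> (\<forall>u\<in>S. \<forall>v\<in>S. ip u v = ip v u)
     \<and> (\<forall>u\<in>S. \<forall>v\<in>S. \<forall>w\<in>S. ip (\<lambda>x. u x + v x) w = ip u w + ip v w)
     \<and> (\<forall>c. \<forall>u\<in>S. \<forall>v\<in>S. ip (\<lambda>x. c * u x) v = c * ip u v)
     \<and> (\<forall>u\<in>S. u \<noteq> (\<lambda>x. 0) \<longrightarrow> ip u u > 0)
     \<and> (\<forall>X. (\<forall>n. X n \<in> S) \<and>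
            (\<forall>e>0. \<exists>N. \<forall>m\<ge>N. \<forall>n\<ge>N. fnorm ip (\<lambda>x. X m x - X n x) < e)
          \<longrightarrow> (\<exists>u\<in>S. (\<lambda>n. fnorm ip (\<lambda>x. X n x - u x)) \<longlonglongrightarrow> 0))"

definition bdd_lin_functional ::
  "('x \<Rightarrow> real) set \<Rightarrow> (('x \<Rightarrow> real) \<Rightarrow> ('x \<Rightarrow> real) \<Rightarrow> real) \<Rightarrow> (('x \<Rightarrow> real) \<Rightarrow> real) \<Rightarrow> bool" where
  "bdd_lin_functional S ip l \<longleftrightarrow>
     (\<forall>u\<in>S. \<forall>v\<in>S. l (\<lambda>x. u x + v x) = l u + l v)
   \<and> (\<forall>c. \<forall>u\<in>S. l (\<lambda>x. c * u x) = c * l u)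
   \<and> (\<exists>C. \<forall>u\<in>S. \<bar>l u\<bar> \<le> C * fnorm ip u)"

definition dual_fspace ::
  "('x \<Rightarrow> real) set \<Rightarrow> (('x \<Rightarrow> real) \<Rightarrow> ('x \<Rightarrow> real) \<Rightarrow> real) \<Rightarrow> ('x \<Rightarrow> real) set
   \<Rightarrow> (('x \<Rightarrow> real) \<Rightarrow> ('x \<Rightarrow> real) \<Rightarrow> real) \<Rightarrow> bool" where
  "dual_fspace S ip Ss p \<longleftrightarrow> fsubspace Ss
     \<and> (\<forall>g\<in>Ss. bdd_lin_functional S ip (p g))
     \<and> (\<forall>g\<in>Ss. \<forall>h\<in>Ss. \<forall>u\<in>S. p (\<lambda>x. g x + h x) u = p g u + p h u)
     \<and> (\<forall>c. \<forall>g\<in>Ss. \<forall>u\<in>S. p (\<lambda>x. c * g x) u = c * p g u)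
     \<and> (\<forall>l. bdd_lin_functional S ip l \<longrightarrow> (\<exists>!g. g \<in> Ss \<and> (\<forall>u\<in>S. p g u = l u)))"

definition dual_norm ::
  "('x \<Rightarrow> real) set \<Rightarrow> (('x \<Rightarrow> real) \<Rightarrow> ('x \<Rightarrow> real) \<Rightarrow> real) \<Rightarrow> (('x \<Rightarrow> real) \<Rightarrow> ('x \<Rightarrow> real) \<Rightarrow> real)
   \<Rightarrow> ('x \<Rightarrow> real) \<Rightarrow> real" where
  "dual_norm S ip p g = Sup ({0} \<union> {\<bar>p g u\<bar> | u. u \<in> S \<and> fnorm ip u \<le> 1})"

definition lin_map :: "('x \<Rightarrow> real) set \<Rightarrow> ('y \<Rightarrow> real) set \<Rightarrow> (('x \<Rightarrow> real) \<Rightarrow> ('y \<Rightarrow> real)) \<Rightarrow> bool" where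
  "lin_map S T F \<longleftrightarrow> (\<forall>u\<in>S. F u \<in> T)
     \<and> (\<forall>u\<in>S. \<forall>v\<in>S. F (\<lambda>x. u x + v x) = (\<lambda>y. F u y + F v y))
     \<and> (\<forall>c. \<forall>u\<in>S. F (\<lambda>x. c * u x) = (\<lambda>y. c * F u y))"

definition small_o :: "(real \<Rightarrow> real) \<Rightarrow> bool" where
  "small_o g \<longleftrightarrow> (\<forall>s. g s \<ge> 0) \<and> ((\<lambda>s. g s / s) \<longlongrightarrow> 0) (at 0)"

definition pullback_unif ::
  "real set \<Rightarrow> (real \<Rightarrow> 'x \<Rightarrow> 'x) \<Rightarrow> (real \<Rightarrow> ('x \<Rightarrow> real) set) \<Rightarrow> (real \<Rightarrow> ('x \<Rightarrow> real) \<Rightarrow> real)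
   \<Rightarrow> ('x \<Rightarrow> real) set \<Rightarrow> (('x \<Rightarrow> real) \<Rightarrow> real) \<Rightarrow> bool" where
  "pullback_unif I \<phi> S1 n1 S0 n0 \<longleftrightarrow>
     (\<forall>s\<in>I. bij_betw (\<lambda>v. v \<circ> \<phi> s) (S1 s) S0)
   \<and> (\<exists>C. \<forall>s\<in>I. \<forall>v\<in>S1 s. n0 (v \<circ> \<phi> s) \<le> C * n1 s v \<and> n1 s v \<le> C * n0 (v \<circ> \<phi> s))"

text \<open>W^{1,\<infinity>} on a set K: bounded and Lipschitz; W^{1,\<infinity>}_loc: on every compact set.
  The W^{1,\<infinity>}(K) norm is sup norm plus the Lipschitz constant.\<close>
definition W1inf_on :: "'a::euclidean_space set \<Rightarrow> ('a \<Rightarrow> 'a) \<Rightarrow> bool" where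
  "W1inf_on K g \<longleftrightarrow> bounded (g ` K) \<and> (\<exists>L. L-lipschitz_on K g)"

definition W1inf_loc :: "('a::euclidean_space \<Rightarrow> 'a) \<Rightarrow> bool" where
  "W1inf_loc g \<longleftrightarrow> (\<forall>K. compact K \<longrightarrow> W1inf_on K g)"

definition w1inf_norm :: "'a::euclidean_space set \<Rightarrow> ('a \<Rightarrow> 'a) \<Rightarrow> real" where
  "w1inf_norm K g = (SUP x\<in>K. norm (g x))
      + (SUP p\<in>{(x, y). x \<in> K \<and> y \<in> K \<and> x \<noteq> y}. dist (g (fst p)) (g (snd p)) / dist (fst p) (snd p))"

definition C1_W1inf_loc :: "real set \<Rightarrow> (real \<Rightarrow> 'a::euclidean_space \<Rightarrow> 'a) \<Rightarrow> bool" where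
  "C1_W1inf_loc I \<phi> \<longleftrightarrow> (\<exists>\<phi>'. \<forall>s\<in>I. W1inf_loc (\<phi> s) \<and> W1inf_loc (\<phi>' s) \<and>
     (\<forall>R>0.
        ((\<lambda>h. w1inf_norm (cball 0 R) (\<lambda>x. (\<phi> (s + h) x - \<phi> s x) /\<^sub>R h - \<phi>' s x)) \<longlongrightarrow> 0)
          (at 0 within {h. s + h \<in> I})
      \<and> ((\<lambda>r. w1inf_norm (cball 0 R) (\<lambda>x. \<phi>' r x - \<phi>' s x)) \<longlongrightarrow> 0) (at s within I)))"

definition energy ::
  "(('x \<Rightarrow> real) \<Rightarrow> ('x \<Rightarrow> real) \<Rightarrow> real) \<Rightarrow> (('x \<Rightarrow> real) \<Rightarrow> ('x \<Rightarrow> real)) \<Rightarrow> ('x \<Rightarrow> real)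
   \<Rightarrow> ('x \<Rightarrow> real) \<Rightarrow> real" where
  "energy p A f u = p (\<lambda>x. (1/2) * A u x - f x) u"

definition lagrangian ::
  "(('x \<Rightarrow> real) \<Rightarrow> ('x \<Rightarrow> real) \<Rightarrow> real) \<Rightarrow> (('x \<Rightarrow> real) \<Rightarrow> ('x \<Rightarrow> real) \<Rightarrow> real)
   \<Rightarrow> (('x \<Rightarrow> real) \<Rightarrow> ('x \<Rightarrow> real)) \<Rightarrow> (('x \<Rightarrow> real) \<Rightarrow> ('x \<Rightarrow> real)) \<Rightarrow> ('x \<Rightarrow> real)
   \<Rightarrow> ('x \<Rightarrow> real) \<Rightarrow> ('x \<Rightarrow> real) \<Rightarrow> real" where
  "lagrangian p q A B f u \<mu> = energy p A f u - q \<mu> (B u)"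

definition is_minimizer :: "'a set \<Rightarrow> ('a \<Rightarrow> real) \<Rightarrow> 'a \<Rightarrow> bool" where
  "is_minimizer K E u \<longleftrightarrow> u \<in> K \<and> (\<forall>w\<in>K. E u \<le> E w)"

definition is_saddle :: "'a set \<Rightarrow> 'b set \<Rightarrow> ('a \<Rightarrow> 'b \<Rightarrow> real) \<Rightarrow> 'a \<Rightarrow> 'b \<Rightarrow> bool" where
  "is_saddle X Y L u \<mu> \<longleftrightarrow> u \<in> X \<and> \<mu> \<in> Y \<and>
     (\<forall>w\<in>X. \<forall>\<nu>\<in>Y. L u \<nu> \<le> L u \<mu> \<and> L u \<mu> \<le> L w \<mu>)"

definition eq_cone :: "('x \<Rightarrow> real) set \<Rightarrow> (('x \<Rightarrow> real) \<Rightarrow> ('y \<Rightarrow> real)) \<Rightarrow> ('x \<Rightarrow> real) set" where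
  "eq_cone V B = {u \<in> V. B u = (\<lambda>x. 0)}"

definition eq_cone_dual :: "('y \<Rightarrow> real) set \<Rightarrow> ('y \<Rightarrow> real) set" where
  "eq_cone_dual Hs = Hs"

end

(*
  Pulling back along phi_s turns the problem on Omega_(t+s) into a one-parameter family of saddle
  problems on the fixed spaces over Omega_t, with data A + s A1 + A2_s, B + s B1 + B2_s and
  f + s f1 + f2_s, whose saddle points are (u_(t+s) o phi_s, lambda_(t+s) o phi_s). For saddle points
  (u_0, l_0) of L_0 and (u_s, l_s) of L_s, the saddle inequalities bracket the change of the saddle
  value:
    L_s(u_s, l_0) - L_0(u_s, l_0) <= L_s(u_s, l_s) - L_0(u_0, l_0) <= L_s(u_0, l_s) - L_0(u_0, l_s),
  and L_s - L_0 = s L1 + o(s) on bounded sets, where L1 is the Lagrangian of the first-order data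
  (A1, B1, f1). After division by s both bounds tend to L1(u_0, l_0) once u_s -> u_0 and l_s -> l_0.
  Coercivity of A gives the bound on u_s and on the primal error; the multipliers are controlled by
  an inf-sup constant of the surjective B, obtained from the Baire category theorem through the
  uniform boundedness principle.
*)

theory Submission
  imports Defs
begin

section \<open>Hilbert function spaces and their duals\<close>

locale hspace =
  fixes S :: "('x \<Rightarrow> real) set" and ip :: "('x \<Rightarrow> real) \<Rightarrow> ('x \<Rightarrow> real) \<Rightarrow> real"
  assumes hilbert: "hilbert_fspace S ip"
begin

abbreviation nrm :: "('x \<Rightarrow> real) \<Rightarrow> real" where
  "nrm \<equiv> fnorm ip"

lemma zero_mem [simp, intro]: "(\<lambda>x. 0) \<in> S"
  and add_mem [simp, intro]: "u \<in> S \<Longrightarrow> v \<in> S \<Longrightarrow> (\<lambda>x. u x + v x) \<in> S"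
  and scale_mem [simp, intro]: "u \<in> S \<Longrightarrow> (\<lambda>x. c * u x) \<in> S"
  using hilbert by (simp_all add: hilbert_fspace_def fsubspace_def)

lemma fsubspace: "fsubspace S"
  using hilbert by (simp add: hilbert_fspace_def)

lemma diff_mem [simp, intro]: "u \<in> S \<Longrightarrow> v \<in> S \<Longrightarrow> (\<lambda>x. u x - v x) \<in> S"
  using add_mem[of u "\<lambda>x. (-1) * v x"] scale_mem[of v "-1"] by simp

lemma neg_mem [simp, intro]: "u \<in> S \<Longrightarrow> (\<lambda>x. - u x) \<in> S"
  using scale_mem[of u "-1"] by simp

lemma ip_sym: "u \<in> S \<Longrightarrow> v \<in> S \<Longrightarrow> ip u v = ip v u"
  and ip_add_left [simp]: "u \<in> S \<Longrightarrow> v \<in> S \<Longrightarrow> w \<in> S \<Longrightarrow> ip (\<lambda>x. u x + v x) w = ip u w + ip v w"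
  and ip_scale_left [simp]: "u \<in> S \<Longrightarrow> v \<in> S \<Longrightarrow> ip (\<lambda>x. c * u x) v = c * ip u v"
  and ip_pos: "u \<in> S \<Longrightarrow> u \<noteq> (\<lambda>x. 0) \<Longrightarrow> ip u u > 0"
  using hilbert unfolding hilbert_fspace_def by blast+

lemma ip_zero_left [simp]: "w \<in> S \<Longrightarrow> ip (\<lambda>x. 0) w = 0"
  using ip_scale_left[of w w 0] by simp

lemma ip_self_nonneg:
  assumes "u \<in> S"
  shows "ip u u \<ge> 0"
proof (cases "u = (\<lambda>x. 0)")
  case False
  then show ?thesis using ip_pos[OF assms] by (simp add: less_imp_le)
qed (simp add: assms)

lemma ip_add_scale_self:
  assumes u: "u \<in> S" and v: "v \<in> S"
  shows "ip (\<lambda>x. u x + c * v x) (\<lambda>x. u x + c * v x) = ip u u + 2 * c * ip u v + c\<^sup>2 * ip v v"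
proof -
  let ?w = "\<lambda>x. u x + c * v x"
  have w: "?w \<in> S" using u v by simp
  have "ip ?w ?w = ip u ?w + c * ip v ?w"
    using u v w by simp
  also have "ip u ?w = ip u u + c * ip u v"
    using ip_sym[OF u w] ip_sym[OF u v] u v by simp
  also have "ip v ?w = ip u v + c * ip v v"
    using ip_sym[OF v w] u v by simp
  finally show ?thesis by (simp add: power2_eq_square algebra_simps)
qed

lemma nrm_nonneg [simp]: "u \<in> S \<Longrightarrow> nrm u \<ge> 0"
  using ip_self_nonneg by (simp add: fnorm_def)

lemma nrm_zero [simp]: "nrm (\<lambda>x. 0) = 0"
  by (simp add: fnorm_def)

lemma nrm_sq: "u \<in> S \<Longrightarrow> (nrm u)\<^sup>2 = ip u u"
  using ip_self_nonneg by (simp add: fnorm_def)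

lemma nrm_eq_0_iff:
  assumes "u \<in> S"
  shows "nrm u = 0 \<longleftrightarrow> u = (\<lambda>x. 0)"
proof -
  have "nrm u = 0 \<longleftrightarrow> ip u u = 0"
    by (simp add: fnorm_def)
  then show ?thesis using ip_pos[OF assms] assms by force
qed

lemma cauchy_schwarz:
  assumes u: "u \<in> S" and v: "v \<in> S"
  shows "\<bar>ip u v\<bar> \<le> nrm u * nrm v"
proof (cases "v = (\<lambda>x. 0)")
  case True
  then show ?thesis using ip_sym[OF u v] u v by simp
next
  case False
  have v_pos: "ip v v > 0" using ip_pos[OF v False] .
  define c where "c = - ip u v / ip v v"
  have "0 \<le> ip u u + 2 * c * ip u v + c\<^sup>2 * ip v v"
    using ip_self_nonneg[of "\<lambda>x. u x + c * v x"] ip_add_scale_self[OF u v] u v by simp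
  also have "\<dots> = ip u u - (ip u v)\<^sup>2 / ip v v"
    using v_pos by (simp add: c_def field_simps power2_eq_square)
  finally have "(ip u v)\<^sup>2 \<le> (nrm u * nrm v)\<^sup>2"
    using v_pos by (simp add: nrm_sq u v power_mult_distrib field_simps)
  then have "\<bar>ip u v\<bar> \<le> \<bar>nrm u * nrm v\<bar>"
    by (simp only: abs_le_square_iff)
  then show ?thesis using u v by simp
qed

lemma nrm_scale:
  assumes "u \<in> S"
  shows "nrm (\<lambda>x. c * u x) = \<bar>c\<bar> * nrm u"
proof -
  have "ip (\<lambda>x. c * u x) (\<lambda>x. c * u x) = c\<^sup>2 * ip u u"
    using ip_sym[OF assms scale_mem[OF assms]] assms by (simp add: power2_eq_square)
  then show ?thesis by (simp add: fnorm_def real_sqrt_mult)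
qed

lemma nrm_triangle:
  assumes u: "u \<in> S" and v: "v \<in> S"
  shows "nrm (\<lambda>x. u x + v x) \<le> nrm u + nrm v"
proof (rule power2_le_imp_le)
  have "(nrm (\<lambda>x. u x + v x))\<^sup>2 = ip u u + 2 * ip u v + ip v v"
    using ip_add_scale_self[OF u v, of 1] nrm_sq[OF add_mem[OF u v]] by simp
  also have "\<dots> \<le> (nrm u)\<^sup>2 + 2 * (nrm u * nrm v) + (nrm v)\<^sup>2"
    using cauchy_schwarz[OF u v] by (simp add: nrm_sq u v)
  finally show "(nrm (\<lambda>x. u x + v x))\<^sup>2 \<le> (nrm u + nrm v)\<^sup>2"
    by (simp add: power2_sum)
qed (simp add: u v)

lemma nrm_diff_le: "u \<in> S \<Longrightarrow> v \<in> S \<Longrightarrow> nrm (\<lambda>x. u x - v x) \<le> nrm u + nrm v"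
  using nrm_triangle[of u "\<lambda>x. - v x"] nrm_scale[of v "-1"] by simp

lemma nrm_diff_commute: "u \<in> S \<Longrightarrow> v \<in> S \<Longrightarrow> nrm (\<lambda>x. u x - v x) = nrm (\<lambda>x. v x - u x)"
  using nrm_scale[of "\<lambda>x. u x - v x" "-1"] by simp

lemma nrm_add_scale_le: "u \<in> S \<Longrightarrow> v \<in> S \<Longrightarrow> nrm (\<lambda>x. c * u x + v x) \<le> \<bar>c\<bar> * nrm u + nrm v"
  using nrm_triangle[of "\<lambda>x. c * u x" v] nrm_scale[of u c] by simp

lemma nrm_diff_triangle:
  "u \<in> S \<Longrightarrow> v \<in> S \<Longrightarrow> w \<in> S \<Longrightarrow> nrm (\<lambda>x. u x - w x) \<le> nrm (\<lambda>x. u x - v x) + nrm (\<lambda>x. v x - w x)"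
  using nrm_triangle[of "\<lambda>x. u x - v x" "\<lambda>x. v x - w x"] by simp

lemma complete:
  "(\<forall>n. X n \<in> S) \<Longrightarrow> (\<forall>e>0. \<exists>N. \<forall>m\<ge>N. \<forall>n\<ge>N. nrm (\<lambda>x. X m x - X n x) < e)
    \<Longrightarrow> \<exists>u\<in>S. (\<lambda>n. nrm (\<lambda>x. X n x - u x)) \<longlonglongrightarrow> 0"
  using hilbert unfolding hilbert_fspace_def by blast

text \<open>Defined for all functions, since \<^locale>\<open>Metric_space\<close> demands nonnegativity and symmetry
  everywhere.\<close>

definition hdist :: "('x \<Rightarrow> real) \<Rightarrow> ('x \<Rightarrow> real) \<Rightarrow> real" where
  "hdist u v = (if u \<in> S \<and> v \<in> S then nrm (\<lambda>x. u x - v x) else 0)"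

sublocale metric: Metric_space S hdist
proof
  show "0 \<le> hdist u v" for u v by (simp add: hdist_def)
  show "hdist u v = hdist v u" for u v using nrm_diff_commute by (auto simp: hdist_def)
  show "hdist u v = 0 \<longleftrightarrow> u = v" if "u \<in> S" "v \<in> S" for u v
    using that nrm_eq_0_iff[of "\<lambda>x. u x - v x"] by (auto simp: hdist_def fun_eq_iff)
  show "hdist u w \<le> hdist u v + hdist v w" if "u \<in> S" "v \<in> S" "w \<in> S" for u v w
    using that nrm_diff_triangle by (simp add: hdist_def)
qed

lemma metric_mcomplete: metric.mcomplete
  unfolding metric.mcomplete_def
proof (intro allI impI)
  fix \<sigma> assume cauchy: "metric.MCauchy \<sigma>"
  then have mem: "\<forall>n. \<sigma> n \<in> S"
    unfolding metric.MCauchy_def by auto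
  moreover have "\<forall>e>0. \<exists>N. \<forall>m\<ge>N. \<forall>n\<ge>N. nrm (\<lambda>x. \<sigma> m x - \<sigma> n x) < e"
    using cauchy mem unfolding metric.MCauchy_def hdist_def by simp
  ultimately obtain u where u: "u \<in> S" and lim: "(\<lambda>n. nrm (\<lambda>x. \<sigma> n x - u x)) \<longlonglongrightarrow> 0"
    using complete by blast
  have "limitin metric.mtopology \<sigma> u sequentially"
    unfolding metric.limitin_metric
  proof (intro conjI allI impI u)
    fix e :: real assume "e > 0"
    with lim have "\<forall>\<^sub>F n in sequentially. nrm (\<lambda>x. \<sigma> n x - u x) < e"
      by (auto dest: order_tendstoD(2))
    then show "\<forall>\<^sub>F n in sequentially. \<sigma> n \<in> S \<and> hdist (\<sigma> n) u < e"
      by eventually_elim (use mem u in \<open>simp add: hdist_def\<close>)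
  qed
  then show "\<exists>u. limitin metric.mtopology \<sigma> u sequentially" by blast
qed

end


locale dual_hspace = hspace S ip for S :: "('x \<Rightarrow> real) set" and ip +
  fixes Ss :: "('x \<Rightarrow> real) set" and p :: "('x \<Rightarrow> real) \<Rightarrow> ('x \<Rightarrow> real) \<Rightarrow> real"
  assumes dual: "dual_fspace S ip Ss p"
begin

abbreviation dnrm :: "('x \<Rightarrow> real) \<Rightarrow> real" where
  "dnrm \<equiv> dual_norm S ip p"

lemma dual_zero_mem [simp, intro]: "(\<lambda>x. 0) \<in> Ss"
  and dual_add_mem [simp, intro]: "g \<in> Ss \<Longrightarrow> h \<in> Ss \<Longrightarrow> (\<lambda>x. g x + h x) \<in> Ss"
  and dual_scale_mem [simp, intro]: "g \<in> Ss \<Longrightarrow> (\<lambda>x. c * g x) \<in> Ss"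
  using dual by (simp_all add: dual_fspace_def fsubspace_def)

lemma dual_fsubspace: "fsubspace Ss"
  using dual by (simp add: dual_fspace_def)

lemma dual_neg_mem [simp, intro]: "g \<in> Ss \<Longrightarrow> (\<lambda>x. - g x) \<in> Ss"
  using dual_scale_mem[of g "-1"] by simp

lemma dual_diff_mem [simp, intro]: "g \<in> Ss \<Longrightarrow> h \<in> Ss \<Longrightarrow> (\<lambda>x. g x - h x) \<in> Ss"
  using dual_add_mem[of g "\<lambda>x. - h x"] by simp

lemma pair_add_left [simp]: "g \<in> Ss \<Longrightarrow> h \<in> Ss \<Longrightarrow> u \<in> S \<Longrightarrow> p (\<lambda>x. g x + h x) u = p g u + p h u"
  and pair_scale_left [simp]: "g \<in> Ss \<Longrightarrow> u \<in> S \<Longrightarrow> p (\<lambda>x. c * g x) u = c * p g u"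
  and pair_add_right [simp]: "g \<in> Ss \<Longrightarrow> u \<in> S \<Longrightarrow> v \<in> S \<Longrightarrow> p g (\<lambda>x. u x + v x) = p g u + p g v"
  and pair_scale_right [simp]: "g \<in> Ss \<Longrightarrow> u \<in> S \<Longrightarrow> p g (\<lambda>x. c * u x) = c * p g u"
  using dual by (simp_all add: dual_fspace_def bdd_lin_functional_def)

lemma pair_diff_left [simp]: "g \<in> Ss \<Longrightarrow> h \<in> Ss \<Longrightarrow> u \<in> S \<Longrightarrow> p (\<lambda>x. g x - h x) u = p g u - p h u"
  using pair_add_left[of g "\<lambda>x. (-1) * h x" u] pair_scale_left[of h u "-1"] by simp

lemma pair_diff_right [simp]: "g \<in> Ss \<Longrightarrow> u \<in> S \<Longrightarrow> v \<in> S \<Longrightarrow> p g (\<lambda>x. u x - v x) = p g u - p g v"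
  using pair_add_right[of g u "\<lambda>x. (-1) * v x"] pair_scale_right[of g v "-1"] by simp

lemma pair_zero_right [simp]: "g \<in> Ss \<Longrightarrow> p g (\<lambda>x. 0) = 0"
  using pair_scale_right[of g "\<lambda>x. 0" 0] by simp

lemma pair_bounded: "g \<in> Ss \<Longrightarrow> \<exists>C. \<forall>u\<in>S. \<bar>p g u\<bar> \<le> C * nrm u"
  using dual by (simp add: dual_fspace_def bdd_lin_functional_def)

lemma pair_le_by_unit_bound:
  assumes g: "g \<in> Ss" and u: "u \<in> S" and unit: "\<And>y. y \<in> S \<Longrightarrow> nrm y \<le> 1 \<Longrightarrow> \<bar>p g y\<bar> \<le> K"
  shows "\<bar>p g u\<bar> \<le> K * nrm u"
proof (cases "nrm u = 0")
  case True
  then show ?thesis using g u by (simp add: nrm_eq_0_iff)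
next
  case False
  then have n: "nrm u > 0" using u nrm_nonneg by (simp add: less_le)
  define w where "w = (\<lambda>x. (1 / nrm u) * u x)"
  have "w \<in> S" unfolding w_def by (rule scale_mem[OF u])
  moreover have "nrm w = 1" unfolding w_def using nrm_scale[OF u, of "1 / nrm u"] n by simp
  ultimately have "\<bar>p g w\<bar> \<le> K" by (intro unit) simp_all
  moreover have "p g w = p g u / nrm u"
    unfolding w_def using pair_scale_right[OF g u, of "1 / nrm u"] by simp
  ultimately show ?thesis using n by (simp add: abs_div field_simps)
qed

lemma dnrm_set_bdd_above:
  assumes "g \<in> Ss"
  shows "bdd_above ({0} \<union> {\<bar>p g u\<bar> | u. u \<in> S \<and> nrm u \<le> 1})"
proof -
  obtain C where C: "\<And>u. u \<in> S \<Longrightarrow> \<bar>p g u\<bar> \<le> C * nrm u"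
    using pair_bounded[OF assms] by blast
  have "\<bar>p g u\<bar> \<le> \<bar>C\<bar>" if "u \<in> S" "nrm u \<le> 1" for u
  proof -
    have "\<bar>p g u\<bar> \<le> \<bar>C\<bar> * nrm u"
      using C[OF that(1)] that(1) by (meson abs_ge_self mult_right_mono nrm_nonneg order_trans)
    also have "\<dots> \<le> \<bar>C\<bar>" using that by (simp add: mult_left_le)
    finally show ?thesis .
  qed
  then show ?thesis by (intro bdd_aboveI[of _ "\<bar>C\<bar>"]) auto
qed

lemma dnrm_nonneg [simp]: "g \<in> Ss \<Longrightarrow> dnrm g \<ge> 0"
  unfolding dual_norm_def by (rule cSup_upper[OF _ dnrm_set_bdd_above]) auto

lemma dnrm_bound:
  assumes g: "g \<in> Ss" and u: "u \<in> S"
  shows "\<bar>p g u\<bar> \<le> dnrm g * nrm u"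
  using g u
proof (rule pair_le_by_unit_bound)
  fix y assume "y \<in> S" "nrm y \<le> 1"
  then show "\<bar>p g y\<bar> \<le> dnrm g"
    unfolding dual_norm_def by (intro cSup_upper[OF _ dnrm_set_bdd_above[OF g]]) auto
qed

lemma pair_le_of_dnrm_le: "g \<in> Ss \<Longrightarrow> u \<in> S \<Longrightarrow> dnrm g \<le> c \<Longrightarrow> \<bar>p g u\<bar> \<le> c * nrm u"
  using dnrm_bound[of g u] mult_right_mono[of "dnrm g" c "nrm u"] by simp

lemma dnrm_le:
  assumes M: "M \<ge> 0" and bound: "\<And>u. u \<in> S \<Longrightarrow> \<bar>p g u\<bar> \<le> M * nrm u"
  shows "dnrm g \<le> M"
  unfolding dual_norm_def
proof (rule cSup_least)
  fix r assume "r \<in> {0} \<union> {\<bar>p g u\<bar> | u. u \<in> S \<and> nrm u \<le> 1}"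
  then show "r \<le> M"
    using M bound by (auto intro: order_trans[OF _ mult_left_le[OF _ M]])
qed simp

lemma dnrm_add_scale_le:
  assumes "g \<in> Ss" "h \<in> Ss"
  shows "dnrm (\<lambda>x. c * g x + h x) \<le> \<bar>c\<bar> * dnrm g + dnrm h"
proof (rule dnrm_le)
  fix u assume u: "u \<in> S"
  have "\<bar>p (\<lambda>x. c * g x + h x) u\<bar> \<le> \<bar>c\<bar> * \<bar>p g u\<bar> + \<bar>p h u\<bar>"
    using assms u by (simp add: abs_mult[symmetric] abs_triangle_ineq)
  also have "\<dots> \<le> \<bar>c\<bar> * (dnrm g * nrm u) + dnrm h * nrm u"
    using assms u by (intro add_mono mult_left_mono dnrm_bound) auto
  finally show "\<bar>p (\<lambda>x. c * g x + h x) u\<bar> \<le> (\<bar>c\<bar> * dnrm g + dnrm h) * nrm u"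
    by (simp add: algebra_simps)
qed (use assms in simp)

lemma pair_dist_le:
  assumes "g \<in> Ss" "u \<in> S" "v \<in> S"
  shows "\<bar>p g u - p g v\<bar> \<le> dnrm g * hdist u v"
  using dnrm_bound[of g "\<lambda>x. u x - v x"] assms by (simp add: hdist_def)

subsection \<open>Uniform boundedness and the inf-sup constant\<close>

lemma closedin_pointwise_bounded:
  assumes F: "F \<subseteq> Ss"
  shows "closedin metric.mtopology {h \<in> S. \<forall>\<nu>\<in>F. \<bar>p \<nu> h\<bar> \<le> c}"
  unfolding metric.metric_closedin_iff_sequentially_closed
proof (intro conjI allI impI)
  fix \<sigma> l assume "range \<sigma> \<subseteq> {h \<in> S. \<forall>\<nu>\<in>F. \<bar>p \<nu> h\<bar> \<le> c} \<and> limitin metric.mtopology \<sigma> l sequentially"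
  then have \<sigma>: "\<And>n. \<sigma> n \<in> S" "\<And>n \<nu>. \<nu> \<in> F \<Longrightarrow> \<bar>p \<nu> (\<sigma> n)\<bar> \<le> c"
    and l: "l \<in> S" and lim: "(\<lambda>n. hdist (\<sigma> n) l) \<longlonglongrightarrow> 0"
    unfolding metric.limitin_metric_dist_null by auto
  have "\<bar>p \<nu> l\<bar> \<le> c" if \<nu>: "\<nu> \<in> F" for \<nu>
  proof -
    have "((\<lambda>n. p \<nu> (\<sigma> n) - p \<nu> l) \<longlongrightarrow> 0) sequentially"
      using pair_dist_le[OF subsetD[OF F \<nu>] \<sigma>(1) l]
      by (intro Lim_null_comparison[OF _ tendsto_mult_right_zero[OF lim, of "dnrm \<nu>"]]) simp
    then have "(\<lambda>n. \<bar>p \<nu> (\<sigma> n)\<bar>) \<longlonglongrightarrow> \<bar>p \<nu> l\<bar>"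
      by (intro tendsto_rabs) (simp add: LIM_zero_iff)
    then show ?thesis
      using \<sigma>(2)[OF \<nu>] by (intro Lim_bounded) auto
  qed
  with l show "l \<in> {h \<in> S. \<forall>\<nu>\<in>F. \<bar>p \<nu> h\<bar> \<le> c}" by blast
qed auto

lemma dnrm_le_of_ball_bound:
  assumes \<nu>: "\<nu> \<in> Ss" and h\<^sub>0: "h\<^sub>0 \<in> S" and r: "r > 0"
    and ball: "\<And>h. h \<in> metric.mball h\<^sub>0 r \<Longrightarrow> \<bar>p \<nu> h\<bar> \<le> c"
  shows "dnrm \<nu> \<le> 4 * c / r"
proof (rule dnrm_le)
  have "\<bar>p \<nu> h\<^sub>0\<bar> \<le> c" using ball h\<^sub>0 r by simp
  then show "0 \<le> 4 * c / r" using r by simp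
  fix y assume y: "y \<in> S"
  show "\<bar>p \<nu> y\<bar> \<le> 4 * c / r * nrm y"
  proof (rule pair_le_by_unit_bound[OF \<nu> y])
    fix z assume z: "z \<in> S" "nrm z \<le> 1"
    define w where "w = (\<lambda>x. h\<^sub>0 x + r / 2 * z x)"
    have w: "w \<in> S" unfolding w_def by (rule add_mem[OF h\<^sub>0 scale_mem[OF z(1)]])
    have "hdist h\<^sub>0 w = r / 2 * nrm z"
      using nrm_scale[OF z(1), of "- r / 2"] h\<^sub>0 w r by (simp add: hdist_def w_def)
    also have "\<dots> < r" using z(2) r by simp
    finally have "\<bar>p \<nu> w\<bar> \<le> c" and "\<bar>p \<nu> h\<^sub>0\<bar> \<le> c"
      using ball h\<^sub>0 w r by simp_all
    moreover have "p \<nu> w = p \<nu> h\<^sub>0 + r / 2 * p \<nu> z"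
      unfolding w_def
      by (simp only: pair_add_right[OF \<nu> h\<^sub>0 scale_mem[OF z(1)]] pair_scale_right[OF \<nu> z(1)])
    ultimately have "r / 2 * \<bar>p \<nu> z\<bar> \<le> 2 * c"
      using r by (simp add: abs_mult)
    then show "\<bar>p \<nu> z\<bar> \<le> 4 * c / r"
      using r by (simp add: field_simps)
  qed
qed

lemma uniform_boundedness:
  assumes F: "F \<subseteq> Ss" and pointwise: "\<And>h. h \<in> S \<Longrightarrow> \<exists>C. \<forall>\<nu>\<in>F. \<bar>p \<nu> h\<bar> \<le> C"
  obtains C where "\<And>\<nu>. \<nu> \<in> F \<Longrightarrow> dnrm \<nu> \<le> C"
proof -
  define K where "K k = {h \<in> S. \<forall>\<nu>\<in>F. \<bar>p \<nu> h\<bar> \<le> real k}" for k :: nat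
  have cover: "\<Union> (range K) = S"
  proof
    show "S \<subseteq> \<Union> (range K)"
    proof
      fix h assume h: "h \<in> S"
      then obtain C where "\<forall>\<nu>\<in>F. \<bar>p \<nu> h\<bar> \<le> C" using pointwise by blast
      then have "h \<in> K (nat \<lceil>C\<rceil>)"
        using h unfolding K_def by (auto intro: order_trans[OF _ real_nat_ceiling_ge])
      then show "h \<in> \<Union> (range K)" by blast
    qed
  qed (auto simp: K_def)
  \<comment> \<open>Baire: the closed sets \<open>K k\<close> cover the complete space, so one of them contains a ball\<close>
  obtain N where "metric.mtopology interior_of K N \<noteq> {}"
  proof (rule ccontr)
    assume "\<not> thesis"
    with that have "metric.mtopology interior_of \<Union> (range K) = {}"
      unfolding K_def
      by (intro metric.metric_Baire_category_alt metric_mcomplete) (auto intro: closedin_pointwise_bounded[OF F])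
    then show False using cover by (metis interior_of_topspace metric.topspace_mtopology empty_iff zero_mem)
  qed
  then obtain h\<^sub>0 where h\<^sub>0: "h\<^sub>0 \<in> metric.mtopology interior_of K N" by blast
  then obtain r where r: "r > 0" and ball: "metric.mball h\<^sub>0 r \<subseteq> K N"
    using interior_of_subset[of metric.mtopology "K N"]
    by (metis metric.openin_mtopology openin_interior_of subset_trans)
  have "h\<^sub>0 \<in> S"
    using h\<^sub>0 interior_of_subset[of metric.mtopology "K N"] by (auto simp: K_def)
  with r ball show thesis
    by (intro that[of "4 * real N / r"] dnrm_le_of_ball_bound) (auto simp: K_def subset_iff F[THEN subsetD])
qed

lemma dnrm_le_of_scaled:
  assumes g: "g \<in> Ss" and M: "M > 0" and bound: "dnrm (\<lambda>x. (1 / M) * g x) \<le> C"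
  shows "dnrm g \<le> C * M"
proof (rule dnrm_le)
  show "0 \<le> C * M"
    using order_trans[OF dnrm_nonneg[OF dual_scale_mem[OF g]] bound] M by simp
  fix h assume h: "h \<in> S"
  have "\<bar>p (\<lambda>x. (1 / M) * g x) h\<bar> \<le> C * nrm h"
    by (rule pair_le_of_dnrm_le[OF dual_scale_mem[OF g] h bound])
  moreover have "p g h = M * p (\<lambda>x. (1 / M) * g x) h"
    using pair_scale_left[OF g h, of "1 / M"] M by simp
  ultimately show "\<bar>p g h\<bar> \<le> C * M * nrm h"
    using mult_left_mono[of _ _ M] M by (simp add: abs_mult algebra_simps)
qed

lemma inf_sup_of_onto:
  assumes onto: "B ` V = S"
  obtains c where "c \<ge> 0"
    "\<And>\<nu> M. \<nu> \<in> Ss \<Longrightarrow> M \<ge> 0 \<Longrightarrow> (\<And>w. w \<in> V \<Longrightarrow> \<bar>p \<nu> (B w)\<bar> \<le> M * n w) \<Longrightarrow> dnrm \<nu> \<le> c * M"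
proof -
  define F where "F = {\<nu> \<in> Ss. \<forall>w\<in>V. \<bar>p \<nu> (B w)\<bar> \<le> n w}"
  obtain C where C: "\<And>\<nu>. \<nu> \<in> F \<Longrightarrow> dnrm \<nu> \<le> C"
  proof (rule uniform_boundedness)
    fix h assume "h \<in> S"
    then obtain w where "w \<in> V" "h = B w" using onto by blast
    then show "\<exists>C. \<forall>\<nu>\<in>F. \<bar>p \<nu> h\<bar> \<le> C" by (auto simp: F_def)
  qed (auto simp: F_def)
  have "dnrm \<nu> \<le> max C 0 * M"
    if \<nu>: "\<nu> \<in> Ss" and M: "M \<ge> 0" and bound: "\<And>w. w \<in> V \<Longrightarrow> \<bar>p \<nu> (B w)\<bar> \<le> M * n w" for \<nu> M
  proof (cases "M = 0")
    case True
    have "\<bar>p \<nu> h\<bar> \<le> 0 * nrm h" if "h \<in> S" for h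
      using bound onto that True by force
    then show ?thesis using True by (simp add: dnrm_le)
  next
    case False
    have "\<bar>p (\<lambda>x. (1 / M) * \<nu> x) (B w)\<bar> \<le> n w" if "w \<in> V" for w
    proof -
      have "p (\<lambda>x. (1 / M) * \<nu> x) (B w) = p \<nu> (B w) / M"
        using pair_scale_left[OF \<nu>, of "B w" "1 / M"] onto that by auto
      moreover have "\<bar>p \<nu> (B w)\<bar> / M \<le> n w"
        using bound[OF that] M False by (simp add: pos_divide_le_eq mult.commute)
      ultimately show ?thesis using M by (simp add: abs_div)
    qed
    then have "(\<lambda>x. (1 / M) * \<nu> x) \<in> F"
      unfolding F_def using dual_scale_mem[OF \<nu>] by blast
    then have "dnrm \<nu> \<le> C * M"
      using C M False by (intro dnrm_le_of_scaled[OF \<nu>]) auto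
    then show ?thesis
      using M by (meson max.cobounded1 mult_right_mono order_trans)
  qed
  then show thesis by (intro that[of "max C 0"]) auto
qed

lemma energy_eq:
  assumes "A v \<in> Ss" "f \<in> Ss" "v \<in> S"
  shows "energy p A f v = 1/2 * p (A v) v - p f v"
  unfolding energy_def
  by (simp only: pair_diff_left[OF dual_scale_mem[OF assms(1)] assms(2,3)] pair_scale_left[OF assms(1,3)])

end

section \<open>Saddle points of quadratic Lagrangians\<close>

lemma linear_coeff_zero_if_quadratic_nonneg:
  fixes G Q :: real
  assumes nonneg: "\<And>e. 0 \<le> e * G + e\<^sup>2 * Q"
  shows "G = 0"
proof (rule ccontr)
  assume "G \<noteq> 0"
  define k where "k = \<bar>Q\<bar> + 1"
  have k: "k > 0" by (simp add: k_def)
  define e where "e = - G / (2 * k)"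
  have "e\<^sup>2 * Q \<le> e\<^sup>2 * k" by (rule mult_left_mono) (auto simp: k_def)
  moreover have "e * G + e\<^sup>2 * k = - G\<^sup>2 / (4 * k)"
    using k by (simp add: e_def field_simps power2_eq_square)
  moreover have "G\<^sup>2 / (4 * k) > 0" using \<open>G \<noteq> 0\<close> k by simp
  ultimately show False using nonneg[of e] by linarith
qed

lemma quadratic_le_linear_imp_le:
  fixes n a C :: real
  assumes "a * n\<^sup>2 \<le> C * n" "0 \<le> n" "0 < a" "0 \<le> C"
  shows "n \<le> C / a"
proof (cases "n = 0")
  case False
  then have "a * n \<le> C" using assms by (simp add: power2_eq_square)
  then show ?thesis using assms(3) by (simp add: field_simps)
qed (use assms in simp)

lemma saddle_value_bracket:
  assumes "is_saddle X Y L\<^sub>0 u\<^sub>0 \<mu>\<^sub>0" "is_saddle X Y L u \<mu>"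
  shows "L u \<mu>\<^sub>0 - L\<^sub>0 u \<mu>\<^sub>0 \<le> L u \<mu> - L\<^sub>0 u\<^sub>0 \<mu>\<^sub>0"
    and "L u \<mu> - L\<^sub>0 u\<^sub>0 \<mu>\<^sub>0 \<le> L u\<^sub>0 \<mu> - L\<^sub>0 u\<^sub>0 \<mu>"
  using assms unfolding is_saddle_def by (smt (verit))+

lemma is_saddle_transfer:
  assumes P: "bij_betw P X X'" and Q: "bij_betw Q Y Y'"
    and L: "\<And>x y. x \<in> X \<Longrightarrow> y \<in> Y \<Longrightarrow> L' (P x) (Q y) = L x y"
    and "is_saddle X Y L u \<mu>"
  shows "is_saddle X' Y' L' (P u) (Q \<mu>)"
proof -
  have X': "X' = P ` X" and Y': "Y' = Q ` Y"
    using P Q by (auto simp: bij_betw_def)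
  show ?thesis
    using assms(4) unfolding is_saddle_def X' Y' by (auto simp: L)
qed

lemma lin_map_mem: "lin_map S T F \<Longrightarrow> u \<in> S \<Longrightarrow> F u \<in> T"
  by (simp add: lin_map_def)

lemma lin_map_combination:
  assumes T: "fsubspace T" and "lin_map S T F" "lin_map S T G" "lin_map S T K"
  shows "lin_map S T (\<lambda>v x. F v x + c * G v x + K v x)"
  using assms unfolding lin_map_def fsubspace_def by (simp add: algebra_simps)

lemma (in hspace) lin_map_add_scale:
  assumes "lin_map S T F" "u \<in> S" "v \<in> S"
  shows "F (\<lambda>x. u x + c * v x) = (\<lambda>y. F u y + c * F v y)"
  using assms by (simp add: lin_map_def)

lemma (in hspace) lin_map_diff:
  assumes "lin_map S T F" "u \<in> S" "v \<in> S"
  shows "F (\<lambda>x. u x - v x) = (\<lambda>y. F u y - F v y)"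
  using lin_map_add_scale[OF assms, of "-1"] by simp

locale saddle_setting =
  V: dual_hspace V ipV Vs pV + H: dual_hspace H ipH Hs pH
  for V :: "('x \<Rightarrow> real) set" and ipV Vs pV and H :: "('x \<Rightarrow> real) set" and ipH Hs pH
begin

lemma lagrangian_eq:
  assumes "lin_map V Vs A" "f \<in> Vs" "v \<in> V"
  shows "lagrangian pV pH A B f v \<mu> = 1/2 * pV (A v) v - pV f v - pH \<mu> (B v)"
  using V.energy_eq[of A v f, OF lin_map_mem[OF assms(1,3)] assms(2,3)] by (simp add: lagrangian_def)

lemma lagrangian_add_scale:
  assumes A: "lin_map V Vs A" and B: "lin_map V H B" and f: "f \<in> Vs" and \<mu>: "\<mu> \<in> Hs"
    and u: "u \<in> V" and z: "z \<in> V"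
  shows "lagrangian pV pH A B f (\<lambda>x. u x + e * z x) \<mu> = lagrangian pV pH A B f u \<mu>
    + e * (1/2 * (pV (A u) z + pV (A z) u) - pV f z - pH \<mu> (B z)) + e\<^sup>2 * (1/2 * pV (A z) z)"
proof -
  have Au: "A u \<in> Vs" and Az: "A z \<in> Vs" and Bu: "B u \<in> H" and Bz: "B z \<in> H"
    using A B u z by (simp_all add: lin_map_mem)
  have w: "(\<lambda>x. u x + e * z x) \<in> V" using u z by simp
  show ?thesis
    unfolding lagrangian_eq[OF A f w] lagrangian_eq[OF A f u]
      V.lin_map_add_scale[OF A u z] V.lin_map_add_scale[OF B u z]
    using Au Az Bu Bz u z f \<mu> by (simp add: power2_eq_square algebra_simps)
qed

lemma saddle_point_conditions:
  assumes A: "lin_map V Vs A" and B: "lin_map V H B" and f: "f \<in> Vs"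
    and saddle: "is_saddle V Hs (lagrangian pV pH A B f) u \<mu>"
  shows "u \<in> V" "\<mu> \<in> Hs"
    and "\<And>\<nu>. \<nu> \<in> Hs \<Longrightarrow> pH \<nu> (B u) = 0"
    and "\<And>z. z \<in> V \<Longrightarrow> 1/2 * (pV (A u) z + pV (A z) u) - pV f z - pH \<mu> (B z) = 0"
proof -
  let ?L = "lagrangian pV pH A B f"
  show u: "u \<in> V" and \<mu>: "\<mu> \<in> Hs" using saddle by (auto simp: is_saddle_def)
  have max: "?L u \<nu> \<le> ?L u \<mu>" if "\<nu> \<in> Hs" for \<nu>
    using saddle that by (auto simp: is_saddle_def)
  have min: "?L u \<mu> \<le> ?L w \<mu>" if "w \<in> V" for w
    using saddle that by (auto simp: is_saddle_def)
  have Bu: "B u \<in> H" using lin_map_mem[OF B u] .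
  \<comment> \<open>maximality in the multiplier along \<mu> + \<nu> and \<mu> - \<nu>\<close>
  show "pH \<nu> (B u) = 0" if \<nu>: "\<nu> \<in> Hs" for \<nu>
    using max[of "\<lambda>x. \<mu> x + \<nu> x"] max[of "\<lambda>x. \<mu> x - \<nu> x"] \<mu> \<nu> Bu
    by (simp add: lagrangian_def)
  show "1/2 * (pV (A u) z + pV (A z) u) - pV f z - pH \<mu> (B z) = 0" if z: "z \<in> V" for z
  proof (rule linear_coeff_zero_if_quadratic_nonneg)
    fix e :: real
    show "0 \<le> e * (1/2 * (pV (A u) z + pV (A z) u) - pV f z - pH \<mu> (B z)) + e\<^sup>2 * (1/2 * pV (A z) z)"
      using min[of "\<lambda>x. u x + e * z x"] lagrangian_add_scale[OF A B f \<mu> u z, of e] u z by simp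
  qed
qed

lemma saddle_value:
  assumes "lin_map V Vs A" "lin_map V H B" "f \<in> Vs" "is_saddle V Hs (lagrangian pV pH A B f) u \<mu>"
  shows "lagrangian pV pH A B f u \<mu> = energy pV A f u"
  using saddle_point_conditions[OF assms] by (simp add: lagrangian_def)

lemma operator_pair_bound:
  assumes "lin_map V Vs A" "\<And>v. v \<in> V \<Longrightarrow> V.dnrm (A v) \<le> a * V.nrm v" "v \<in> V" "z \<in> V"
  shows "\<bar>pV (A v) z\<bar> \<le> \<bar>a\<bar> * V.nrm v * V.nrm z"
proof -
  have "V.dnrm (A v) \<le> \<bar>a\<bar> * V.nrm v"
    using assms(2,3) by (meson abs_ge_self mult_right_mono order_trans V.nrm_nonneg)
  then show ?thesis by (rule V.pair_le_of_dnrm_le[OF lin_map_mem[OF assms(1,3)] assms(4)])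
qed

lemma constraint_pair_bound:
  assumes "lin_map V H B" "\<And>v. v \<in> V \<Longrightarrow> H.nrm (B v) \<le> b * V.nrm v" "\<mu> \<in> Hs" "v \<in> V"
  shows "\<bar>pH \<mu> (B v)\<bar> \<le> H.dnrm \<mu> * \<bar>b\<bar> * V.nrm v"
proof -
  have "H.nrm (B v) \<le> \<bar>b\<bar> * V.nrm v"
    using assms(2,4) by (meson abs_ge_self mult_right_mono order_trans V.nrm_nonneg)
  then show ?thesis
    using H.dnrm_bound[OF assms(3) lin_map_mem[OF assms(1,4)]] H.dnrm_nonneg[OF assms(3)]
    by (metis mult.assoc mult_left_mono order_trans)
qed

lemma lagrangian_expansion:
  assumes "A\<^sub>0 v \<in> Vs" "A\<^sub>1 v \<in> Vs" "A\<^sub>2 v \<in> Vs" "B\<^sub>0 v \<in> H" "B\<^sub>1 v \<in> H" "B\<^sub>2 v \<in> H"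
    "f\<^sub>0 \<in> Vs" "f\<^sub>1 \<in> Vs" "f\<^sub>2 \<in> Vs" "v \<in> V" "\<mu> \<in> Hs"
  shows "lagrangian pV pH (\<lambda>v x. A\<^sub>0 v x + s * A\<^sub>1 v x + A\<^sub>2 v x) (\<lambda>v x. B\<^sub>0 v x + s * B\<^sub>1 v x + B\<^sub>2 v x)
      (\<lambda>x. f\<^sub>0 x + s * f\<^sub>1 x + f\<^sub>2 x) v \<mu>
    = lagrangian pV pH A\<^sub>0 B\<^sub>0 f\<^sub>0 v \<mu> + s * lagrangian pV pH A\<^sub>1 B\<^sub>1 f\<^sub>1 v \<mu> + lagrangian pV pH A\<^sub>2 B\<^sub>2 f\<^sub>2 v \<mu>"
  using assms by (simp add: lagrangian_def V.energy_eq algebra_simps)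

lemma lagrangian_bound:
  assumes A: "A v \<in> Vs" "V.dnrm (A v) \<le> a * V.nrm v" and B: "B v \<in> H" "H.nrm (B v) \<le> b * V.nrm v"
    and f: "f \<in> Vs" and v: "v \<in> V" and \<mu>: "\<mu> \<in> Hs"
  shows "\<bar>lagrangian pV pH A B f v \<mu>\<bar> \<le> (a / 2 * V.nrm v + V.dnrm f + H.dnrm \<mu> * b) * V.nrm v"
proof -
  have "\<bar>pV (A v) v\<bar> \<le> a * V.nrm v * V.nrm v"
    by (rule V.pair_le_of_dnrm_le[OF A(1) v A(2)])
  moreover have "\<bar>pV f v\<bar> \<le> V.dnrm f * V.nrm v"
    by (rule V.dnrm_bound[OF f v])
  moreover have "\<bar>pH \<mu> (B v)\<bar> \<le> H.dnrm \<mu> * (b * V.nrm v)"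
    using H.dnrm_bound[OF \<mu> B(1)] mult_left_mono[OF B(2) H.dnrm_nonneg[OF \<mu>]] by linarith
  ultimately show ?thesis
    using V.energy_eq[of A v f, OF A(1) f v] unfolding lagrangian_def by (simp add: algebra_simps abs_le_iff)
qed

lemma lagrangian_primal_diff:
  assumes A: "lin_map V Vs A" and B: "lin_map V H B" and f: "f \<in> Vs" and \<mu>: "\<mu> \<in> Hs"
    and u: "u \<in> V" and v: "v \<in> V"
  defines "e \<equiv> \<lambda>x. v x - u x"
  shows "lagrangian pV pH A B f v \<mu> - lagrangian pV pH A B f u \<mu>
    = 1/2 * (pV (A u) e + pV (A e) v) - pV f e - pH \<mu> (B e)"
  unfolding lagrangian_eq[OF A f u] lagrangian_eq[OF A f v] e_def
  using u v A B f \<mu> by (simp add: V.lin_map_diff lin_map_mem algebra_simps)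

lemma lagrangian_dual_diff:
  assumes "lin_map V H B" "v \<in> V" "\<mu> \<in> Hs" "\<nu> \<in> Hs"
  shows "lagrangian pV pH A B f v \<mu> - lagrangian pV pH A B f v \<nu> = - pH (\<lambda>x. \<mu> x - \<nu> x) (B v)"
  using assms by (simp add: lagrangian_def lin_map_mem)

context
  fixes A\<^sub>0 B\<^sub>0 f\<^sub>0 u\<^sub>0 \<mu>\<^sub>0 A B f u \<mu>
  assumes A\<^sub>0: "lin_map V Vs A\<^sub>0" and B\<^sub>0: "lin_map V H B\<^sub>0" and f\<^sub>0: "f\<^sub>0 \<in> Vs"
    and saddle\<^sub>0: "is_saddle V Hs (lagrangian pV pH A\<^sub>0 B\<^sub>0 f\<^sub>0) u\<^sub>0 \<mu>\<^sub>0"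
    and A: "lin_map V Vs A" and B: "lin_map V H B" and f: "f \<in> Vs"
    and saddle: "is_saddle V Hs (lagrangian pV pH A B f) u \<mu>"
begin

text \<open>The stationarity conditions of both problems, tested with the primal error and combined with
  both constraints, express the error in terms of the differences of the data.\<close>

lemma primal_error_identity:
  defines "e \<equiv> \<lambda>x. u x - u\<^sub>0 x"
  shows "pV (A\<^sub>0 e) e = - 1/2 * ((pV (A u) e - pV (A\<^sub>0 u) e) + (pV (A e) u - pV (A\<^sub>0 e) u))
    + (pV f e - pV f\<^sub>0 e) - (pH \<mu> (B u\<^sub>0) - pH \<mu> (B\<^sub>0 u\<^sub>0)) + (pH \<mu>\<^sub>0 (B u) - pH \<mu>\<^sub>0 (B\<^sub>0 u))"
proof -
  note c\<^sub>0 = saddle_point_conditions[OF A\<^sub>0 B\<^sub>0 f\<^sub>0 saddle\<^sub>0]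
  note c = saddle_point_conditions[OF A B f saddle]
  have e: "e \<in> V" unfolding e_def using c(1) c\<^sub>0(1) by simp
  have lin: "pV (A\<^sub>0 e) e = pV (A\<^sub>0 u) e - pV (A\<^sub>0 u\<^sub>0) e" "pV (A\<^sub>0 e) e = pV (A\<^sub>0 e) u - pV (A\<^sub>0 e) u\<^sub>0"
    "pH \<mu> (B e) = pH \<mu> (B u) - pH \<mu> (B u\<^sub>0)" "pH \<mu>\<^sub>0 (B\<^sub>0 e) = pH \<mu>\<^sub>0 (B\<^sub>0 u) - pH \<mu>\<^sub>0 (B\<^sub>0 u\<^sub>0)"
    unfolding e_def using c(1-2) c\<^sub>0(1-2) e[unfolded e_def] A\<^sub>0 B\<^sub>0 B
    by (simp_all add: V.lin_map_diff lin_map_mem)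
  show ?thesis
    using c(4)[OF e] c\<^sub>0(4)[OF e] c(3)[OF c(2)] c(3)[OF c\<^sub>0(2)] c\<^sub>0(3)[OF c(2)] c\<^sub>0(3)[OF c\<^sub>0(2)] lin
    by (simp add: algebra_simps)
qed

lemma dual_error_identity:
  assumes z: "z \<in> V"
  defines "e \<equiv> \<lambda>x. u x - u\<^sub>0 x"
  shows "pH (\<lambda>x. \<mu> x - \<mu>\<^sub>0 x) (B\<^sub>0 z) = 1/2 * (pV (A\<^sub>0 e) z + pV (A\<^sub>0 z) e)
    + 1/2 * ((pV (A u) z - pV (A\<^sub>0 u) z) + (pV (A z) u - pV (A\<^sub>0 z) u))
    - (pV f z - pV f\<^sub>0 z) - (pH \<mu> (B z) - pH \<mu> (B\<^sub>0 z))"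
proof -
  note c\<^sub>0 = saddle_point_conditions[OF A\<^sub>0 B\<^sub>0 f\<^sub>0 saddle\<^sub>0]
  note c = saddle_point_conditions[OF A B f saddle]
  have lin: "pV (A\<^sub>0 e) z = pV (A\<^sub>0 u) z - pV (A\<^sub>0 u\<^sub>0) z" "pV (A\<^sub>0 z) e = pV (A\<^sub>0 z) u - pV (A\<^sub>0 z) u\<^sub>0"
    "pH (\<lambda>x. \<mu> x - \<mu>\<^sub>0 x) (B\<^sub>0 z) = pH \<mu> (B\<^sub>0 z) - pH \<mu>\<^sub>0 (B\<^sub>0 z)"
    unfolding e_def using c(1-2) c\<^sub>0(1-2) z A\<^sub>0 B\<^sub>0
    by (simp_all add: V.lin_map_diff lin_map_mem)
  show ?thesis
    using c(4)[OF z] c\<^sub>0(4)[OF z] lin by (simp add: algebra_simps)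
qed

end

end


section \<open>Stability of saddle points\<close>

locale saddle_stability = saddle_setting V ipV Vs pV H ipH Hs pH
  for V :: "('x \<Rightarrow> real) set" and ipV Vs pV H ipH Hs pH +
  fixes A\<^sub>0 B\<^sub>0 :: "('x \<Rightarrow> real) \<Rightarrow> ('x \<Rightarrow> real)" and f\<^sub>0 u\<^sub>0 \<mu>\<^sub>0 :: "'x \<Rightarrow> real"
    and F :: "'s filter"
    and A B :: "'s \<Rightarrow> ('x \<Rightarrow> real) \<Rightarrow> ('x \<Rightarrow> real)" and f U \<Lambda> :: "'s \<Rightarrow> 'x \<Rightarrow> real"
    and \<alpha> \<gamma> :: real and \<epsilon>\<^sub>A \<epsilon>\<^sub>B \<epsilon>\<^sub>f :: "'s \<Rightarrow> real"
  assumes A\<^sub>0_lin: "lin_map V Vs A\<^sub>0" and B\<^sub>0_lin: "lin_map V H B\<^sub>0" and f\<^sub>0_mem: "f\<^sub>0 \<in> Vs"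
    and coercive: "\<alpha> > 0" "\<And>v. v \<in> V \<Longrightarrow> pV (A\<^sub>0 v) v \<ge> \<alpha> * (V.nrm v)\<^sup>2"
    and A\<^sub>0_bounded: "\<And>v. v \<in> V \<Longrightarrow> V.dnrm (A\<^sub>0 v) \<le> \<gamma> * V.nrm v"
    and B\<^sub>0_onto: "B\<^sub>0 ` V = H"
    and saddle\<^sub>0: "is_saddle V Hs (lagrangian pV pH A\<^sub>0 B\<^sub>0 f\<^sub>0) u\<^sub>0 \<mu>\<^sub>0"
    and perturbed: "\<forall>\<^sub>F s in F. lin_map V Vs (A s) \<and> lin_map V H (B s) \<and> f s \<in> Vs
        \<and> is_saddle V Hs (lagrangian pV pH (A s) (B s) (f s)) (U s) (\<Lambda> s)"
    and A_close: "\<forall>\<^sub>F s in F. \<forall>v\<in>V. V.dnrm (\<lambda>x. A s v x - A\<^sub>0 v x) \<le> \<epsilon>\<^sub>A s * V.nrm v"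
    and B_close: "\<forall>\<^sub>F s in F. \<forall>v\<in>V. H.nrm (\<lambda>x. B s v x - B\<^sub>0 v x) \<le> \<epsilon>\<^sub>B s * V.nrm v"
    and f_close: "\<forall>\<^sub>F s in F. V.dnrm (\<lambda>x. f s x - f\<^sub>0 x) \<le> \<epsilon>\<^sub>f s"
    and \<epsilon>_tendsto: "(\<epsilon>\<^sub>A \<longlongrightarrow> 0) F" "(\<epsilon>\<^sub>B \<longlongrightarrow> 0) F" "(\<epsilon>\<^sub>f \<longlongrightarrow> 0) F"
begin

lemmas saddle\<^sub>0_conditions = saddle_point_conditions[OF A\<^sub>0_lin B\<^sub>0_lin f\<^sub>0_mem saddle\<^sub>0]

lemma A\<^sub>0_pair_bound: "v \<in> V \<Longrightarrow> z \<in> V \<Longrightarrow> \<bar>pV (A\<^sub>0 v) z\<bar> \<le> \<bar>\<gamma>\<bar> * V.nrm v * V.nrm z"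
  by (rule operator_pair_bound[OF A\<^sub>0_lin A\<^sub>0_bounded])

lemma f\<^sub>0_pair_bound: "z \<in> V \<Longrightarrow> \<bar>pV f\<^sub>0 z\<bar> \<le> V.dnrm f\<^sub>0 * V.nrm z"
  using V.dnrm_bound[OF f\<^sub>0_mem] .

lemma abs_\<epsilon>_tendsto: "((\<lambda>s. \<bar>\<epsilon>\<^sub>A s\<bar>) \<longlongrightarrow> 0) F" "((\<lambda>s. \<bar>\<epsilon>\<^sub>B s\<bar>) \<longlongrightarrow> 0) F" "((\<lambda>s. \<bar>\<epsilon>\<^sub>f s\<bar>) \<longlongrightarrow> 0) F"
  using \<epsilon>_tendsto by (simp_all add: tendsto_rabs_zero)

lemma eventually_abs_\<epsilon>_le:
  assumes "c > 0"
  shows "\<forall>\<^sub>F s in F. \<bar>\<epsilon>\<^sub>A s\<bar> \<le> c \<and> \<bar>\<epsilon>\<^sub>B s\<bar> \<le> c \<and> \<bar>\<epsilon>\<^sub>f s\<bar> \<le> c"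
  using abs_\<epsilon>_tendsto[THEN order_tendstoD(2), OF assms] by eventually_elim simp

lemma A_pair_close:
  "\<forall>\<^sub>F s in F. \<forall>v\<in>V. \<forall>z\<in>V. \<bar>pV (A s v) z - pV (A\<^sub>0 v) z\<bar> \<le> \<bar>\<epsilon>\<^sub>A s\<bar> * V.nrm v * V.nrm z"
  using perturbed A_close
proof eventually_elim
  case (elim s)
  show ?case
  proof (intro ballI)
    fix v z assume v: "v \<in> V" and z: "z \<in> V"
    have mem: "A s v \<in> Vs" "A\<^sub>0 v \<in> Vs"
      using elim v A\<^sub>0_lin by (auto simp: lin_map_mem)
    have "\<bar>pV (A s v) z - pV (A\<^sub>0 v) z\<bar> = \<bar>pV (\<lambda>x. A s v x - A\<^sub>0 v x) z\<bar>"
      using mem z by simp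
    also have "\<dots> \<le> \<epsilon>\<^sub>A s * V.nrm v * V.nrm z"
      using V.pair_le_of_dnrm_le[OF V.dual_diff_mem[OF mem] z] elim(2) v by blast
    also have "\<dots> \<le> \<bar>\<epsilon>\<^sub>A s\<bar> * V.nrm v * V.nrm z"
      using v z by (intro mult_right_mono) auto
    finally show "\<bar>pV (A s v) z - pV (A\<^sub>0 v) z\<bar> \<le> \<bar>\<epsilon>\<^sub>A s\<bar> * V.nrm v * V.nrm z" .
  qed
qed

lemma B_pair_close:
  "\<forall>\<^sub>F s in F. \<forall>\<mu>\<in>Hs. \<forall>v\<in>V. \<bar>pH \<mu> (B s v) - pH \<mu> (B\<^sub>0 v)\<bar> \<le> H.dnrm \<mu> * \<bar>\<epsilon>\<^sub>B s\<bar> * V.nrm v"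
  using perturbed B_close
proof eventually_elim
  case (elim s)
  show ?case
  proof (intro ballI)
    fix \<mu> v assume \<mu>: "\<mu> \<in> Hs" and v: "v \<in> V"
    have mem: "B s v \<in> H" "B\<^sub>0 v \<in> H"
      using elim v B\<^sub>0_lin by (auto simp: lin_map_mem)
    have "\<bar>pH \<mu> (B s v) - pH \<mu> (B\<^sub>0 v)\<bar> = \<bar>pH \<mu> (\<lambda>x. B s v x - B\<^sub>0 v x)\<bar>"
      using mem \<mu> by simp
    also have "\<dots> \<le> H.dnrm \<mu> * H.nrm (\<lambda>x. B s v x - B\<^sub>0 v x)"
      using H.dnrm_bound[OF \<mu> H.diff_mem[OF mem]] .
    also have "\<dots> \<le> H.dnrm \<mu> * (\<bar>\<epsilon>\<^sub>B s\<bar> * V.nrm v)"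
      using elim(2) v \<mu> order_trans[OF _ mult_right_mono[OF abs_ge_self V.nrm_nonneg[OF v]]]
      by (intro mult_left_mono) auto
    finally show "\<bar>pH \<mu> (B s v) - pH \<mu> (B\<^sub>0 v)\<bar> \<le> H.dnrm \<mu> * \<bar>\<epsilon>\<^sub>B s\<bar> * V.nrm v"
      by (simp add: mult.assoc)
  qed
qed

lemma f_pair_close:
  "\<forall>\<^sub>F s in F. \<forall>z\<in>V. \<bar>pV (f s) z - pV f\<^sub>0 z\<bar> \<le> \<bar>\<epsilon>\<^sub>f s\<bar> * V.nrm z"
  using perturbed f_close
proof eventually_elim
  case (elim s)
  show ?case
  proof
    fix z assume z: "z \<in> V"
    have "\<bar>pV (f s) z - pV f\<^sub>0 z\<bar> = \<bar>pV (\<lambda>x. f s x - f\<^sub>0 x) z\<bar>"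
      using elim f\<^sub>0_mem z by simp
    also have "\<dots> \<le> \<bar>\<epsilon>\<^sub>f s\<bar> * V.nrm z"
      using V.pair_le_of_dnrm_le[OF V.dual_diff_mem[OF _ f\<^sub>0_mem] z] elim by fastforce
    finally show "\<bar>pV (f s) z - pV f\<^sub>0 z\<bar> \<le> \<bar>\<epsilon>\<^sub>f s\<bar> * V.nrm z" .
  qed
qed

lemma perturbed_conditions:
  "\<forall>\<^sub>F s in F. U s \<in> V \<and> \<Lambda> s \<in> Hs \<and> (\<forall>\<nu>\<in>Hs. pH \<nu> (B s (U s)) = 0)
     \<and> (\<forall>z\<in>V. 1/2 * (pV (A s (U s)) z + pV (A s z) (U s)) - pV (f s) z - pH (\<Lambda> s) (B s z) = 0)"
  using perturbed
proof eventually_elim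
  case (elim s)
  then have "lin_map V Vs (A s)" "lin_map V H (B s)" "f s \<in> Vs"
    and "is_saddle V Hs (lagrangian pV pH (A s) (B s) (f s)) (U s) (\<Lambda> s)"
    by simp_all
  from saddle_point_conditions[OF this] show ?case by simp
qed

lemma solution_bounded:
  obtains K where "K \<ge> 0" "\<forall>\<^sub>F s in F. V.nrm (U s) \<le> K"
proof
  show K: "2 * (V.dnrm f\<^sub>0 + 1) / \<alpha> \<ge> 0" using coercive f\<^sub>0_mem by simp
  have "\<forall>\<^sub>F s in F. \<bar>\<epsilon>\<^sub>A s\<bar> \<le> \<alpha> / 2 \<and> \<bar>\<epsilon>\<^sub>f s\<bar> \<le> 1"
    using eventually_abs_\<epsilon>_le[of "min (\<alpha> / 2) 1"] coercive(1) by (auto elim: eventually_mono)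
  then show "\<forall>\<^sub>F s in F. V.nrm (U s) \<le> 2 * (V.dnrm f\<^sub>0 + 1) / \<alpha>"
    using perturbed_conditions A_pair_close f_pair_close
  proof eventually_elim
    case (elim s)
    let ?u = "U s" and ?n = "V.nrm (U s)"
    have u: "?u \<in> V" using elim by blast
    \<comment> \<open>testing the stationarity condition with the solution itself\<close>
    have "pV (A s ?u) ?u = pV (f s) ?u"
      using elim u by auto
    moreover have "\<bar>pV (A s ?u) ?u - pV (A\<^sub>0 ?u) ?u\<bar> \<le> \<alpha> / 2 * ?n\<^sup>2"
    proof -
      have "\<bar>pV (A s ?u) ?u - pV (A\<^sub>0 ?u) ?u\<bar> \<le> \<bar>\<epsilon>\<^sub>A s\<bar> * ?n * ?n"
        using elim u by blast
      also have "\<dots> \<le> \<alpha> / 2 * ?n * ?n"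
        using elim u by (intro mult_right_mono) auto
      finally show ?thesis by (simp add: power2_eq_square)
    qed
    moreover have "\<bar>pV (f s) ?u\<bar> \<le> (V.dnrm f\<^sub>0 + 1) * ?n"
    proof -
      have "\<bar>pV (f s) ?u - pV f\<^sub>0 ?u\<bar> \<le> \<bar>\<epsilon>\<^sub>f s\<bar> * ?n"
        using elim u by blast
      also have "\<dots> \<le> ?n"
        using elim u by (intro mult_left_le_one_le) auto
      finally show ?thesis
        using f\<^sub>0_pair_bound[OF u] by (simp add: algebra_simps)
    qed
    ultimately have "\<alpha> / 2 * ?n\<^sup>2 \<le> (V.dnrm f\<^sub>0 + 1) * ?n"
      using coercive(2)[OF u] by linarith
    then have "?n \<le> (V.dnrm f\<^sub>0 + 1) / (\<alpha> / 2)"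
      by (rule quadratic_le_linear_imp_le) (use u coercive(1) f\<^sub>0_mem in auto)
    then show "?n \<le> 2 * (V.dnrm f\<^sub>0 + 1) / \<alpha>"
      by (simp add: field_simps)
  qed
qed

lemmas inf_sup = H.inf_sup_of_onto[OF B\<^sub>0_onto]

lemma multiplier_test_bound:
  assumes K: "\<forall>\<^sub>F s in F. V.nrm (U s) \<le> K"
  shows "\<forall>\<^sub>F s in F. \<forall>w\<in>V.
    \<bar>pH (\<Lambda> s) (B\<^sub>0 w)\<bar> \<le> ((\<bar>\<gamma>\<bar> + 1) * K + V.dnrm f\<^sub>0 + 1 + \<bar>\<epsilon>\<^sub>B s\<bar> * H.dnrm (\<Lambda> s)) * V.nrm w"
  using perturbed_conditions K eventually_abs_\<epsilon>_le[OF zero_less_one] A_pair_close B_pair_close f_pair_close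
proof eventually_elim
  case (elim s)
  let ?u = "U s" and ?l = "\<Lambda> s"
  have u: "?u \<in> V" and l: "?l \<in> Hs" using elim by blast+
  show ?case
  proof
    fix w assume w: "w \<in> V"
    have "\<bar>pV (A s ?u) w - pV (A\<^sub>0 ?u) w\<bar> \<le> \<bar>\<epsilon>\<^sub>A s\<bar> * V.nrm ?u * V.nrm w"
      and "\<bar>pV (A s w) ?u - pV (A\<^sub>0 w) ?u\<bar> \<le> \<bar>\<epsilon>\<^sub>A s\<bar> * V.nrm w * V.nrm ?u"
      and "\<bar>pV (f s) w - pV f\<^sub>0 w\<bar> \<le> \<bar>\<epsilon>\<^sub>f s\<bar> * V.nrm w"
      and "\<bar>pH ?l (B s w) - pH ?l (B\<^sub>0 w)\<bar> \<le> H.dnrm ?l * \<bar>\<epsilon>\<^sub>B s\<bar> * V.nrm w"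
      and "pH ?l (B s w) = 1/2 * (pV (A s ?u) w + pV (A s w) ?u) - pV (f s) w"
      using elim u w l by auto
    moreover have "\<bar>\<gamma>\<bar> * V.nrm ?u * V.nrm w \<le> \<bar>\<gamma>\<bar> * K * V.nrm w"
      and "\<bar>\<epsilon>\<^sub>A s\<bar> * V.nrm ?u * V.nrm w \<le> 1 * K * V.nrm w"
      and "\<bar>\<epsilon>\<^sub>f s\<bar> * V.nrm w \<le> 1 * V.nrm w"
      by (intro mult_right_mono mult_left_mono mult_mono; use elim u w in simp)+
    ultimately show "\<bar>pH ?l (B\<^sub>0 w)\<bar>
        \<le> ((\<bar>\<gamma>\<bar> + 1) * K + V.dnrm f\<^sub>0 + 1 + \<bar>\<epsilon>\<^sub>B s\<bar> * H.dnrm ?l) * V.nrm w"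
      using A\<^sub>0_pair_bound[OF u w] A\<^sub>0_pair_bound[OF w u] f\<^sub>0_pair_bound[OF w]
      by (simp add: algebra_simps abs_le_iff)
  qed
qed

lemma multiplier_bounded:
  obtains K where "K \<ge> 0" "\<forall>\<^sub>F s in F. H.dnrm (\<Lambda> s) \<le> K"
proof -
  obtain K\<^sub>U where K\<^sub>U: "K\<^sub>U \<ge> 0" "\<forall>\<^sub>F s in F. V.nrm (U s) \<le> K\<^sub>U"
    using solution_bounded by blast
  obtain c where c: "c \<ge> 0" and inf_sup: "\<And>\<nu> M. \<nu> \<in> Hs \<Longrightarrow> M \<ge> 0 \<Longrightarrow>
      (\<And>w. w \<in> V \<Longrightarrow> \<bar>pH \<nu> (B\<^sub>0 w)\<bar> \<le> M * V.nrm w) \<Longrightarrow> H.dnrm \<nu> \<le> c * M"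
    using inf_sup by blast
  define K\<^sub>0 where "K\<^sub>0 = (\<bar>\<gamma>\<bar> + 1) * K\<^sub>U + V.dnrm f\<^sub>0 + 1"
  have K\<^sub>0: "K\<^sub>0 \<ge> 0" using K\<^sub>U f\<^sub>0_mem by (simp add: K\<^sub>0_def)
  have "((\<lambda>s. c * \<bar>\<epsilon>\<^sub>B s\<bar>) \<longlongrightarrow> c * 0) F"
    by (intro tendsto_mult tendsto_const abs_\<epsilon>_tendsto)
  then have small: "\<forall>\<^sub>F s in F. c * \<bar>\<epsilon>\<^sub>B s\<bar> < 1/2"
    by (intro order_tendstoD(2)) auto
  \<comment> \<open>the inf-sup bound controls the multiplier up to a small multiple of its own norm\<close>
  have "\<forall>\<^sub>F s in F. H.dnrm (\<Lambda> s) \<le> 2 * c * K\<^sub>0"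
    using perturbed_conditions multiplier_test_bound[OF K\<^sub>U(2)] small
  proof eventually_elim
    case (elim s)
    then have l: "\<Lambda> s \<in> Hs" by blast
    have "H.dnrm (\<Lambda> s) \<le> c * (K\<^sub>0 + \<bar>\<epsilon>\<^sub>B s\<bar> * H.dnrm (\<Lambda> s))"
      using elim K\<^sub>0 l unfolding K\<^sub>0_def by (intro inf_sup) auto
    also have "\<dots> \<le> c * K\<^sub>0 + 1/2 * H.dnrm (\<Lambda> s)"
      using mult_right_mono[OF less_imp_le[OF elim(3)] H.dnrm_nonneg[OF l]] by (simp add: algebra_simps)
    finally show "H.dnrm (\<Lambda> s) \<le> 2 * c * K\<^sub>0" by simp
  qed
  with c K\<^sub>0 show thesis by (intro that[of "2 * c * K\<^sub>0"]) auto
qed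

lemma primal_error_estimate:
  obtains R where "\<forall>\<^sub>F s in F.
    \<alpha> * (V.nrm (\<lambda>x. U s x - u\<^sub>0 x))\<^sup>2 \<le> 2 * (R * R) * (\<bar>\<epsilon>\<^sub>A s\<bar> + \<bar>\<epsilon>\<^sub>B s\<bar> + \<bar>\<epsilon>\<^sub>f s\<bar>)"
proof -
  obtain K\<^sub>U where K\<^sub>U: "K\<^sub>U \<ge> 0" "\<forall>\<^sub>F s in F. V.nrm (U s) \<le> K\<^sub>U"
    using solution_bounded by blast
  obtain K\<^sub>\<Lambda> where K\<^sub>\<Lambda>: "K\<^sub>\<Lambda> \<ge> 0" "\<forall>\<^sub>F s in F. H.dnrm (\<Lambda> s) \<le> K\<^sub>\<Lambda>"
    using multiplier_bounded by blast
  define R where "R = K\<^sub>U + V.nrm u\<^sub>0 + K\<^sub>\<Lambda> + H.dnrm \<mu>\<^sub>0 + 1"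
  have R: "1 \<le> R" "K\<^sub>U \<le> R" "V.nrm u\<^sub>0 \<le> R" "K\<^sub>\<Lambda> \<le> R" "H.dnrm \<mu>\<^sub>0 \<le> R" "K\<^sub>U + V.nrm u\<^sub>0 \<le> R"
    using K\<^sub>U(1) K\<^sub>\<Lambda>(1) saddle\<^sub>0_conditions(1,2) by (simp_all add: R_def)
  have prod: "a * b * c \<le> a * (R * R)" if "0 \<le> a" "0 \<le> b" "b \<le> R" "0 \<le> c" "c \<le> R" for a b c
    using that by (simp add: mult.assoc mult_left_mono mult_mono)
  have "\<forall>\<^sub>F s in F.
    \<alpha> * (V.nrm (\<lambda>x. U s x - u\<^sub>0 x))\<^sup>2 \<le> 2 * (R * R) * (\<bar>\<epsilon>\<^sub>A s\<bar> + \<bar>\<epsilon>\<^sub>B s\<bar> + \<bar>\<epsilon>\<^sub>f s\<bar>)"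
    using perturbed perturbed_conditions K\<^sub>U(2) K\<^sub>\<Lambda>(2) A_pair_close B_pair_close f_pair_close
  proof eventually_elim
    case (elim s)
    let ?u = "U s" and ?l = "\<Lambda> s" and ?e = "\<lambda>x. U s x - u\<^sub>0 x"
    have u: "?u \<in> V" and l: "?l \<in> Hs" and u\<^sub>0: "u\<^sub>0 \<in> V" and \<mu>\<^sub>0: "\<mu>\<^sub>0 \<in> Hs"
      using elim saddle\<^sub>0_conditions by blast+
    have e: "?e \<in> V" using u u\<^sub>0 by simp
    have lin: "lin_map V Vs (A s)" "lin_map V H (B s)" "f s \<in> Vs"
      and saddle: "is_saddle V Hs (lagrangian pV pH (A s) (B s) (f s)) ?u ?l"
      using elim by blast+
    have u_le: "V.nrm ?u \<le> R" and l_le: "H.dnrm ?l \<le> R" and e_le: "V.nrm ?e \<le> R"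
      using elim R V.nrm_diff_le[OF u u\<^sub>0] by linarith+
    have "\<bar>pV (A s ?u) ?e - pV (A\<^sub>0 ?u) ?e\<bar> \<le> \<bar>\<epsilon>\<^sub>A s\<bar> * V.nrm ?u * V.nrm ?e"
      and "\<bar>pV (A s ?e) ?u - pV (A\<^sub>0 ?e) ?u\<bar> \<le> \<bar>\<epsilon>\<^sub>A s\<bar> * V.nrm ?e * V.nrm ?u"
      and "\<bar>pV (f s) ?e - pV f\<^sub>0 ?e\<bar> \<le> \<bar>\<epsilon>\<^sub>f s\<bar> * V.nrm ?e"
      and "\<bar>pH ?l (B s u\<^sub>0) - pH ?l (B\<^sub>0 u\<^sub>0)\<bar> \<le> H.dnrm ?l * \<bar>\<epsilon>\<^sub>B s\<bar> * V.nrm u\<^sub>0"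
      and "\<bar>pH \<mu>\<^sub>0 (B s ?u) - pH \<mu>\<^sub>0 (B\<^sub>0 ?u)\<bar> \<le> H.dnrm \<mu>\<^sub>0 * \<bar>\<epsilon>\<^sub>B s\<bar> * V.nrm ?u"
      using elim u e l u\<^sub>0 \<mu>\<^sub>0 by blast+
    moreover have "\<bar>\<epsilon>\<^sub>A s\<bar> * V.nrm ?u * V.nrm ?e \<le> \<bar>\<epsilon>\<^sub>A s\<bar> * (R * R)"
      and "\<bar>\<epsilon>\<^sub>A s\<bar> * V.nrm ?e * V.nrm ?u \<le> \<bar>\<epsilon>\<^sub>A s\<bar> * (R * R)"
      and "H.dnrm ?l * \<bar>\<epsilon>\<^sub>B s\<bar> * V.nrm u\<^sub>0 \<le> \<bar>\<epsilon>\<^sub>B s\<bar> * (R * R)"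
      and "H.dnrm \<mu>\<^sub>0 * \<bar>\<epsilon>\<^sub>B s\<bar> * V.nrm ?u \<le> \<bar>\<epsilon>\<^sub>B s\<bar> * (R * R)"
      unfolding mult.commute[of "H.dnrm _" "\<bar>\<epsilon>\<^sub>B s\<bar>"]
      by (intro prod; use u e l u\<^sub>0 \<mu>\<^sub>0 u_le l_le e_le R in simp)+
    moreover have "\<bar>\<epsilon>\<^sub>f s\<bar> * V.nrm ?e \<le> \<bar>\<epsilon>\<^sub>f s\<bar> * (R * R)"
      using prod[of "\<bar>\<epsilon>\<^sub>f s\<bar>" "V.nrm ?e" 1] e e_le R by simp
    ultimately have "pV (A\<^sub>0 ?e) ?e \<le> 2 * (R * R) * (\<bar>\<epsilon>\<^sub>A s\<bar> + \<bar>\<epsilon>\<^sub>B s\<bar> + \<bar>\<epsilon>\<^sub>f s\<bar>)"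
      using primal_error_identity[OF A\<^sub>0_lin B\<^sub>0_lin f\<^sub>0_mem saddle\<^sub>0 lin saddle]
      by (simp add: algebra_simps abs_le_iff)
    then show ?case
      using coercive(2)[OF e] by linarith
  qed
  then show thesis by (rule that)
qed

lemma solution_tendsto: "((\<lambda>s. V.nrm (\<lambda>x. U s x - u\<^sub>0 x)) \<longlongrightarrow> 0) F"
proof -
  obtain R where R: "\<forall>\<^sub>F s in F.
      \<alpha> * (V.nrm (\<lambda>x. U s x - u\<^sub>0 x))\<^sup>2 \<le> 2 * (R * R) * (\<bar>\<epsilon>\<^sub>A s\<bar> + \<bar>\<epsilon>\<^sub>B s\<bar> + \<bar>\<epsilon>\<^sub>f s\<bar>)"
    using primal_error_estimate by blast
  have "((\<lambda>s. 2 * (R * R) / \<alpha> * (\<bar>\<epsilon>\<^sub>A s\<bar> + \<bar>\<epsilon>\<^sub>B s\<bar> + \<bar>\<epsilon>\<^sub>f s\<bar>)) \<longlongrightarrow> 0) F"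
    using tendsto_add[OF tendsto_add[OF abs_\<epsilon>_tendsto(1,2)] abs_\<epsilon>_tendsto(3)]
    by (intro tendsto_mult_right_zero) simp
  moreover have "\<forall>\<^sub>F s in F. norm ((V.nrm (\<lambda>x. U s x - u\<^sub>0 x))\<^sup>2)
      \<le> 2 * (R * R) / \<alpha> * (\<bar>\<epsilon>\<^sub>A s\<bar> + \<bar>\<epsilon>\<^sub>B s\<bar> + \<bar>\<epsilon>\<^sub>f s\<bar>)"
    using R by eventually_elim (use coercive(1) in \<open>simp add: field_simps\<close>)
  ultimately have "((\<lambda>s. (V.nrm (\<lambda>x. U s x - u\<^sub>0 x))\<^sup>2) \<longlongrightarrow> 0) F"
    by (rule Lim_null_comparison[rotated])
  from tendsto_real_sqrt[OF this] show ?thesis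
    by (simp add: tendsto_rabs_zero_iff)
qed

lemma dual_error_estimate:
  obtains c K\<^sub>U K\<^sub>\<Lambda> where "\<forall>\<^sub>F s in F. H.dnrm (\<lambda>x. \<Lambda> s x - \<mu>\<^sub>0 x)
    \<le> c * (\<bar>\<gamma>\<bar> * V.nrm (\<lambda>x. U s x - u\<^sub>0 x) + K\<^sub>U * \<bar>\<epsilon>\<^sub>A s\<bar> + \<bar>\<epsilon>\<^sub>f s\<bar> + K\<^sub>\<Lambda> * \<bar>\<epsilon>\<^sub>B s\<bar>)"
proof -
  obtain K\<^sub>U where K\<^sub>U: "K\<^sub>U \<ge> 0" "\<forall>\<^sub>F s in F. V.nrm (U s) \<le> K\<^sub>U"
    using solution_bounded by blast
  obtain K\<^sub>\<Lambda> where K\<^sub>\<Lambda>: "K\<^sub>\<Lambda> \<ge> 0" "\<forall>\<^sub>F s in F. H.dnrm (\<Lambda> s) \<le> K\<^sub>\<Lambda>"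
    using multiplier_bounded by blast
  obtain c where inf_sup: "\<And>\<nu> M. \<nu> \<in> Hs \<Longrightarrow> M \<ge> 0 \<Longrightarrow>
      (\<And>w. w \<in> V \<Longrightarrow> \<bar>pH \<nu> (B\<^sub>0 w)\<bar> \<le> M * V.nrm w) \<Longrightarrow> H.dnrm \<nu> \<le> c * M"
    using inf_sup by blast
  have "\<forall>\<^sub>F s in F. H.dnrm (\<lambda>x. \<Lambda> s x - \<mu>\<^sub>0 x)
    \<le> c * (\<bar>\<gamma>\<bar> * V.nrm (\<lambda>x. U s x - u\<^sub>0 x) + K\<^sub>U * \<bar>\<epsilon>\<^sub>A s\<bar> + \<bar>\<epsilon>\<^sub>f s\<bar> + K\<^sub>\<Lambda> * \<bar>\<epsilon>\<^sub>B s\<bar>)"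
    using perturbed perturbed_conditions K\<^sub>U(2) K\<^sub>\<Lambda>(2) A_pair_close B_pair_close f_pair_close
  proof eventually_elim
    case (elim s)
    let ?u = "U s" and ?l = "\<Lambda> s" and ?e = "\<lambda>x. U s x - u\<^sub>0 x"
    have u: "?u \<in> V" and l: "?l \<in> Hs" and u\<^sub>0: "u\<^sub>0 \<in> V" and \<mu>\<^sub>0: "\<mu>\<^sub>0 \<in> Hs"
      using elim saddle\<^sub>0_conditions by blast+
    have e: "?e \<in> V" using u u\<^sub>0 by simp
    have lin: "lin_map V Vs (A s)" "lin_map V H (B s)" "f s \<in> Vs"
      and saddle: "is_saddle V Hs (lagrangian pV pH (A s) (B s) (f s)) ?u ?l"
      using elim by blast+
    show ?case
    proof (rule inf_sup)
      show "0 \<le> \<bar>\<gamma>\<bar> * V.nrm ?e + K\<^sub>U * \<bar>\<epsilon>\<^sub>A s\<bar> + \<bar>\<epsilon>\<^sub>f s\<bar> + K\<^sub>\<Lambda> * \<bar>\<epsilon>\<^sub>B s\<bar>"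
        using K\<^sub>U K\<^sub>\<Lambda> e by simp
      fix w assume w: "w \<in> V"
      have "\<bar>pV (A s ?u) w - pV (A\<^sub>0 ?u) w\<bar> \<le> \<bar>\<epsilon>\<^sub>A s\<bar> * V.nrm ?u * V.nrm w"
        and "\<bar>pV (A s w) ?u - pV (A\<^sub>0 w) ?u\<bar> \<le> \<bar>\<epsilon>\<^sub>A s\<bar> * V.nrm w * V.nrm ?u"
        and "\<bar>pV (f s) w - pV f\<^sub>0 w\<bar> \<le> \<bar>\<epsilon>\<^sub>f s\<bar> * V.nrm w"
        and "\<bar>pH ?l (B s w) - pH ?l (B\<^sub>0 w)\<bar> \<le> H.dnrm ?l * \<bar>\<epsilon>\<^sub>B s\<bar> * V.nrm w"
        using elim u w l by blast+
      moreover have "\<bar>\<epsilon>\<^sub>A s\<bar> * V.nrm ?u * V.nrm w \<le> \<bar>\<epsilon>\<^sub>A s\<bar> * K\<^sub>U * V.nrm w"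
        and "\<bar>\<epsilon>\<^sub>A s\<bar> * V.nrm w * V.nrm ?u \<le> \<bar>\<epsilon>\<^sub>A s\<bar> * V.nrm w * K\<^sub>U"
        and "H.dnrm ?l * \<bar>\<epsilon>\<^sub>B s\<bar> * V.nrm w \<le> K\<^sub>\<Lambda> * \<bar>\<epsilon>\<^sub>B s\<bar> * V.nrm w"
        by (intro mult_right_mono mult_left_mono; use elim u w in simp)+
      ultimately show "\<bar>pH (\<lambda>x. ?l x - \<mu>\<^sub>0 x) (B\<^sub>0 w)\<bar>
          \<le> (\<bar>\<gamma>\<bar> * V.nrm ?e + K\<^sub>U * \<bar>\<epsilon>\<^sub>A s\<bar> + \<bar>\<epsilon>\<^sub>f s\<bar> + K\<^sub>\<Lambda> * \<bar>\<epsilon>\<^sub>B s\<bar>) * V.nrm w"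
        using dual_error_identity[OF A\<^sub>0_lin B\<^sub>0_lin f\<^sub>0_mem saddle\<^sub>0 lin saddle w]
          A\<^sub>0_pair_bound[OF e w] A\<^sub>0_pair_bound[OF w e]
        by (simp add: algebra_simps abs_le_iff)
    qed (use l \<mu>\<^sub>0 in simp)
  qed
  then show thesis by (rule that)
qed

lemma multiplier_tendsto: "((\<lambda>s. H.dnrm (\<lambda>x. \<Lambda> s x - \<mu>\<^sub>0 x)) \<longlongrightarrow> 0) F"
proof -
  obtain c K\<^sub>U K\<^sub>\<Lambda> where bound: "\<forall>\<^sub>F s in F. H.dnrm (\<lambda>x. \<Lambda> s x - \<mu>\<^sub>0 x)
      \<le> c * (\<bar>\<gamma>\<bar> * V.nrm (\<lambda>x. U s x - u\<^sub>0 x) + K\<^sub>U * \<bar>\<epsilon>\<^sub>A s\<bar> + \<bar>\<epsilon>\<^sub>f s\<bar> + K\<^sub>\<Lambda> * \<bar>\<epsilon>\<^sub>B s\<bar>)"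
    using dual_error_estimate by blast
  have "((\<lambda>s. \<bar>\<gamma>\<bar> * V.nrm (\<lambda>x. U s x - u\<^sub>0 x) + K\<^sub>U * \<bar>\<epsilon>\<^sub>A s\<bar> + \<bar>\<epsilon>\<^sub>f s\<bar> + K\<^sub>\<Lambda> * \<bar>\<epsilon>\<^sub>B s\<bar>)
      \<longlongrightarrow> \<bar>\<gamma>\<bar> * 0 + K\<^sub>U * 0 + 0 + K\<^sub>\<Lambda> * 0) F"
    by (intro tendsto_intros solution_tendsto abs_\<epsilon>_tendsto)
  then have "((\<lambda>s. c * (\<bar>\<gamma>\<bar> * V.nrm (\<lambda>x. U s x - u\<^sub>0 x) + K\<^sub>U * \<bar>\<epsilon>\<^sub>A s\<bar> + \<bar>\<epsilon>\<^sub>f s\<bar> + K\<^sub>\<Lambda> * \<bar>\<epsilon>\<^sub>B s\<bar>))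
      \<longlongrightarrow> 0) F"
    by (simp add: tendsto_mult_right_zero)
  moreover have "\<forall>\<^sub>F s in F. norm (H.dnrm (\<lambda>x. \<Lambda> s x - \<mu>\<^sub>0 x))
      \<le> c * (\<bar>\<gamma>\<bar> * V.nrm (\<lambda>x. U s x - u\<^sub>0 x) + K\<^sub>U * \<bar>\<epsilon>\<^sub>A s\<bar> + \<bar>\<epsilon>\<^sub>f s\<bar> + K\<^sub>\<Lambda> * \<bar>\<epsilon>\<^sub>B s\<bar>)"
    using bound perturbed_conditions
    by eventually_elim (use saddle\<^sub>0_conditions(2) in simp)
  ultimately show ?thesis
    by (rule Lim_null_comparison[rotated])
qed

end

section \<open>Derivative of the saddle value\<close>

lemma difference_quotient_squeeze:
  fixes D X Y r\<^sub>1 r\<^sub>2 :: "real \<Rightarrow> real"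
  assumes bracket: "\<forall>\<^sub>F s in at 0. s * X s + r\<^sub>1 s \<le> D s \<and> D s \<le> s * Y s + r\<^sub>2 s"
    and X: "(X \<longlongrightarrow> T) (at 0)" and Y: "(Y \<longlongrightarrow> T) (at 0)"
    and r\<^sub>1: "((\<lambda>s. r\<^sub>1 s / s) \<longlongrightarrow> 0) (at 0)" and r\<^sub>2: "((\<lambda>s. r\<^sub>2 s / s) \<longlongrightarrow> 0) (at 0)"
  shows "((\<lambda>s. D s / s) \<longlongrightarrow> T) (at 0)"
proof -
  have lower: "((\<lambda>s. X s + r\<^sub>1 s / s) \<longlongrightarrow> T) F" and upper: "((\<lambda>s. Y s + r\<^sub>2 s / s) \<longlongrightarrow> T) F"
    if "F \<le> at 0" for F
    using tendsto_add[OF X r\<^sub>1] tendsto_add[OF Y r\<^sub>2] tendsto_mono[OF that] by auto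
  have quotients: "X s + r\<^sub>1 s / s = (s * X s + r\<^sub>1 s) / s" "Y s + r\<^sub>2 s / s = (s * Y s + r\<^sub>2 s) / s"
    if "s \<noteq> 0" for s
    using that by (simp_all add: field_simps)
  have "\<forall>\<^sub>F s in at_right 0. X s + r\<^sub>1 s / s \<le> D s / s \<and> D s / s \<le> Y s + r\<^sub>2 s / s"
    using conjunct2[OF bracket[unfolded eventually_at_split]] eventually_at_right_less[of 0]
    by eventually_elim (simp add: quotients divide_right_mono)
  then have "((\<lambda>s. D s / s) \<longlongrightarrow> T) (at_right 0)"
    by (intro tendsto_sandwich[OF _ _ lower upper] at_le) (auto elim: eventually_mono)
  moreover have "\<forall>\<^sub>F s in at_left 0. s < (0::real)"
    using eventually_at_left_real[of "-1" 0] by (auto elim: eventually_mono)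
  with conjunct1[OF bracket[unfolded eventually_at_split]]
  have "\<forall>\<^sub>F s in at_left 0. Y s + r\<^sub>2 s / s \<le> D s / s \<and> D s / s \<le> X s + r\<^sub>1 s / s"
    by eventually_elim (simp add: quotients divide_right_mono_neg)
  then have "((\<lambda>s. D s / s) \<longlongrightarrow> T) (at_left 0)"
    by (intro tendsto_sandwich[OF _ _ upper lower] at_le) (auto elim: eventually_mono)
  ultimately show ?thesis
    by (simp add: filterlim_at_split)
qed
lemma small_o_nonneg: "small_o g \<Longrightarrow> g s \<ge> 0"
  by (simp add: small_o_def)

lemma small_o_div_abs_tendsto:
  assumes "small_o g"
  shows "((\<lambda>s. g s / \<bar>s\<bar>) \<longlongrightarrow> 0) (at 0)"
proof -
  have "(\<lambda>s. g s / \<bar>s\<bar>) = (\<lambda>s. \<bar>g s / s\<bar>)"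
    using small_o_nonneg[OF assms] by (simp add: abs_divide)
  moreover have "((\<lambda>s. \<bar>g s / s\<bar>) \<longlongrightarrow> 0) (at 0)"
    using assms unfolding small_o_def by (intro tendsto_rabs_zero) simp
  ultimately show ?thesis by (simp only:)
qed

lemma small_o_tendsto:
  assumes "small_o g"
  shows "(g \<longlongrightarrow> 0) (at 0)"
proof -
  have "((\<lambda>s. g s / \<bar>s\<bar> * \<bar>s\<bar>) \<longlongrightarrow> 0 * 0) (at 0)"
    by (intro tendsto_mult small_o_div_abs_tendsto[OF assms] tendsto_rabs_zero tendsto_ident_at)
  moreover have "\<forall>\<^sub>F s in at 0. g s / \<bar>s\<bar> * \<bar>s\<bar> = g s"
    by (simp add: eventually_at_filter)
  ultimately show ?thesis by (simp add: tendsto_cong)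
qed

locale saddle_expansion = saddle_setting V ipV Vs pV H ipH Hs pH
  for V :: "('x \<Rightarrow> real) set" and ipV Vs pV H ipH Hs pH +
  fixes A\<^sub>0 A\<^sub>1 B\<^sub>0 B\<^sub>1 :: "('x \<Rightarrow> real) \<Rightarrow> ('x \<Rightarrow> real)"
    and A\<^sub>2 B\<^sub>2 :: "real \<Rightarrow> ('x \<Rightarrow> real) \<Rightarrow> ('x \<Rightarrow> real)"
    and f\<^sub>0 f\<^sub>1 u\<^sub>0 \<mu>\<^sub>0 :: "'x \<Rightarrow> real" and f\<^sub>2 U \<Lambda> :: "real \<Rightarrow> 'x \<Rightarrow> real"
    and \<alpha> \<gamma> c\<^sub>A c\<^sub>B :: real and o\<^sub>A o\<^sub>B o\<^sub>f :: "real \<Rightarrow> real"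
  assumes A\<^sub>0_lin: "lin_map V Vs A\<^sub>0" and B\<^sub>0_lin: "lin_map V H B\<^sub>0" and f\<^sub>0_mem: "f\<^sub>0 \<in> Vs"
    and coercive: "\<alpha> > 0" "\<And>v. v \<in> V \<Longrightarrow> pV (A\<^sub>0 v) v \<ge> \<alpha> * (V.nrm v)\<^sup>2"
    and A\<^sub>0_bounded: "\<And>v. v \<in> V \<Longrightarrow> V.dnrm (A\<^sub>0 v) \<le> \<gamma> * V.nrm v"
    and B\<^sub>0_onto: "B\<^sub>0 ` V = H"
    and saddle\<^sub>0: "is_saddle V Hs (lagrangian pV pH A\<^sub>0 B\<^sub>0 f\<^sub>0) u\<^sub>0 \<mu>\<^sub>0"
    and A\<^sub>1_lin: "lin_map V Vs A\<^sub>1" and A\<^sub>1_bounded: "\<And>v. v \<in> V \<Longrightarrow> V.dnrm (A\<^sub>1 v) \<le> c\<^sub>A * V.nrm v"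
    and B\<^sub>1_lin: "lin_map V H B\<^sub>1" and B\<^sub>1_bounded: "\<And>v. v \<in> V \<Longrightarrow> H.nrm (B\<^sub>1 v) \<le> c\<^sub>B * V.nrm v"
    and f\<^sub>1_mem: "f\<^sub>1 \<in> Vs"
    and remainder: "\<forall>\<^sub>F s in at 0. lin_map V Vs (A\<^sub>2 s) \<and> lin_map V H (B\<^sub>2 s) \<and> f\<^sub>2 s \<in> Vs
        \<and> (\<forall>v\<in>V. V.dnrm (A\<^sub>2 s v) \<le> o\<^sub>A s * V.nrm v \<and> H.nrm (B\<^sub>2 s v) \<le> o\<^sub>B s * V.nrm v)
        \<and> V.dnrm (f\<^sub>2 s) \<le> o\<^sub>f s"
    and remainder_small: "small_o o\<^sub>A" "small_o o\<^sub>B" "small_o o\<^sub>f"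
    and saddle: "\<forall>\<^sub>F s in at 0. is_saddle V Hs (lagrangian pV pH
        (\<lambda>v x. A\<^sub>0 v x + s * A\<^sub>1 v x + A\<^sub>2 s v x) (\<lambda>v x. B\<^sub>0 v x + s * B\<^sub>1 v x + B\<^sub>2 s v x)
        (\<lambda>x. f\<^sub>0 x + s * f\<^sub>1 x + f\<^sub>2 s x)) (U s) (\<Lambda> s)"
begin

abbreviation A\<^sub>s :: "real \<Rightarrow> ('x \<Rightarrow> real) \<Rightarrow> ('x \<Rightarrow> real)" where
  "A\<^sub>s s \<equiv> \<lambda>v x. A\<^sub>0 v x + s * A\<^sub>1 v x + A\<^sub>2 s v x"

abbreviation B\<^sub>s :: "real \<Rightarrow> ('x \<Rightarrow> real) \<Rightarrow> ('x \<Rightarrow> real)" where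
  "B\<^sub>s s \<equiv> \<lambda>v x. B\<^sub>0 v x + s * B\<^sub>1 v x + B\<^sub>2 s v x"

abbreviation f\<^sub>s :: "real \<Rightarrow> 'x \<Rightarrow> real" where
  "f\<^sub>s s \<equiv> \<lambda>x. f\<^sub>0 x + s * f\<^sub>1 x + f\<^sub>2 s x"

lemma perturbed_lin: "\<forall>\<^sub>F s in at 0. lin_map V Vs (A\<^sub>s s) \<and> lin_map V H (B\<^sub>s s) \<and> f\<^sub>s s \<in> Vs"
  using remainder
  by eventually_elim (simp add: lin_map_combination[OF V.dual_fsubspace] lin_map_combination[OF H.fsubspace]
      A\<^sub>0_lin A\<^sub>1_lin B\<^sub>0_lin B\<^sub>1_lin f\<^sub>0_mem f\<^sub>1_mem)

lemma A\<^sub>s_close: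
  "\<forall>\<^sub>F s in at 0. \<forall>v\<in>V. V.dnrm (\<lambda>x. A\<^sub>s s v x - A\<^sub>0 v x) \<le> (\<bar>s\<bar> * \<bar>c\<^sub>A\<bar> + o\<^sub>A s) * V.nrm v"
  using remainder
proof eventually_elim
  case (elim s)
  show ?case
  proof
    fix v assume v: "v \<in> V"
    have "V.dnrm (\<lambda>x. A\<^sub>s s v x - A\<^sub>0 v x) \<le> \<bar>s\<bar> * V.dnrm (A\<^sub>1 v) + V.dnrm (A\<^sub>2 s v)"
      using V.dnrm_add_scale_le[of "A\<^sub>1 v" "A\<^sub>2 s v" s] elim v A\<^sub>1_lin
      by (simp add: lin_map_mem[of V Vs "A\<^sub>2 s"] lin_map_mem[of V Vs A\<^sub>1])
    also have "\<dots> \<le> \<bar>s\<bar> * (\<bar>c\<^sub>A\<bar> * V.nrm v) + o\<^sub>A s * V.nrm v"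
      using elim v A\<^sub>1_bounded[OF v] order_trans[OF _ mult_right_mono[OF abs_ge_self V.nrm_nonneg[OF v]]]
      by (intro add_mono mult_left_mono) auto
    finally show "V.dnrm (\<lambda>x. A\<^sub>s s v x - A\<^sub>0 v x) \<le> (\<bar>s\<bar> * \<bar>c\<^sub>A\<bar> + o\<^sub>A s) * V.nrm v"
      by (simp add: algebra_simps)
  qed
qed

lemma B\<^sub>s_close:
  "\<forall>\<^sub>F s in at 0. \<forall>v\<in>V. H.nrm (\<lambda>x. B\<^sub>s s v x - B\<^sub>0 v x) \<le> (\<bar>s\<bar> * \<bar>c\<^sub>B\<bar> + o\<^sub>B s) * V.nrm v"
  using remainder
proof eventually_elim
  case (elim s)
  show ?case
  proof
    fix v assume v: "v \<in> V"
    have "H.nrm (\<lambda>x. B\<^sub>s s v x - B\<^sub>0 v x) \<le> \<bar>s\<bar> * H.nrm (B\<^sub>1 v) + H.nrm (B\<^sub>2 s v)"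
      using H.nrm_add_scale_le[of "B\<^sub>1 v" "B\<^sub>2 s v" s] elim v B\<^sub>1_lin
      by (simp add: lin_map_mem[of V H "B\<^sub>2 s"] lin_map_mem[of V H B\<^sub>1])
    also have "\<dots> \<le> \<bar>s\<bar> * (\<bar>c\<^sub>B\<bar> * V.nrm v) + o\<^sub>B s * V.nrm v"
      using elim v B\<^sub>1_bounded[OF v] order_trans[OF _ mult_right_mono[OF abs_ge_self V.nrm_nonneg[OF v]]]
      by (intro add_mono mult_left_mono) auto
    finally show "H.nrm (\<lambda>x. B\<^sub>s s v x - B\<^sub>0 v x) \<le> (\<bar>s\<bar> * \<bar>c\<^sub>B\<bar> + o\<^sub>B s) * V.nrm v"
      by (simp add: algebra_simps)
  qed
qed

lemma f\<^sub>s_close: "\<forall>\<^sub>F s in at 0. V.dnrm (\<lambda>x. f\<^sub>s s x - f\<^sub>0 x) \<le> \<bar>s\<bar> * V.dnrm f\<^sub>1 + o\<^sub>f s"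
  using remainder
proof eventually_elim
  case (elim s)
  then show ?case using V.dnrm_add_scale_le[of f\<^sub>1 "f\<^sub>2 s" s] f\<^sub>1_mem by simp
qed

lemma linear_plus_small_o_tendsto: "small_o g \<Longrightarrow> ((\<lambda>s. \<bar>s\<bar> * c + g s) \<longlongrightarrow> 0) (at 0)"
  using tendsto_add[OF tendsto_mult[OF tendsto_rabs_zero[OF tendsto_ident_at] tendsto_const] small_o_tendsto]
  by simp

sublocale stability: saddle_stability V ipV Vs pV H ipH Hs pH A\<^sub>0 B\<^sub>0 f\<^sub>0 u\<^sub>0 \<mu>\<^sub>0 "at 0" A\<^sub>s B\<^sub>s f\<^sub>s U \<Lambda> \<alpha> \<gamma>
  "\<lambda>s. \<bar>s\<bar> * \<bar>c\<^sub>A\<bar> + o\<^sub>A s" "\<lambda>s. \<bar>s\<bar> * \<bar>c\<^sub>B\<bar> + o\<^sub>B s" "\<lambda>s. \<bar>s\<bar> * V.dnrm f\<^sub>1 + o\<^sub>f s"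
proof unfold_locales
  show "\<forall>\<^sub>F s in at 0. lin_map V Vs (A\<^sub>s s) \<and> lin_map V H (B\<^sub>s s) \<and> f\<^sub>s s \<in> Vs
      \<and> is_saddle V Hs (lagrangian pV pH (A\<^sub>s s) (B\<^sub>s s) (f\<^sub>s s)) (U s) (\<Lambda> s)"
    using perturbed_lin saddle by eventually_elim simp
qed (fact A\<^sub>0_lin B\<^sub>0_lin f\<^sub>0_mem coercive A\<^sub>0_bounded B\<^sub>0_onto saddle\<^sub>0 A\<^sub>s_close B\<^sub>s_close f\<^sub>s_close
    linear_plus_small_o_tendsto[OF remainder_small(1)] linear_plus_small_o_tendsto[OF remainder_small(2)]
    linear_plus_small_o_tendsto[OF remainder_small(3)])+

lemma energy_difference_bracket:
  "\<forall>\<^sub>F s in at 0.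
     s * lagrangian pV pH A\<^sub>1 B\<^sub>1 f\<^sub>1 (U s) \<mu>\<^sub>0 + lagrangian pV pH (A\<^sub>2 s) (B\<^sub>2 s) (f\<^sub>2 s) (U s) \<mu>\<^sub>0
       \<le> energy pV (A\<^sub>s s) (f\<^sub>s s) (U s) - energy pV A\<^sub>0 f\<^sub>0 u\<^sub>0
   \<and> energy pV (A\<^sub>s s) (f\<^sub>s s) (U s) - energy pV A\<^sub>0 f\<^sub>0 u\<^sub>0
       \<le> s * lagrangian pV pH A\<^sub>1 B\<^sub>1 f\<^sub>1 u\<^sub>0 (\<Lambda> s) + lagrangian pV pH (A\<^sub>2 s) (B\<^sub>2 s) (f\<^sub>2 s) u\<^sub>0 (\<Lambda> s)"
  using perturbed_lin saddle remainder stability.perturbed_conditions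
proof eventually_elim
  case (elim s)
  let ?L = "lagrangian pV pH (A\<^sub>s s) (B\<^sub>s s) (f\<^sub>s s)" and ?L\<^sub>0 = "lagrangian pV pH A\<^sub>0 B\<^sub>0 f\<^sub>0"
  have lin: "lin_map V Vs (A\<^sub>s s)" "lin_map V H (B\<^sub>s s)" "f\<^sub>s s \<in> Vs"
    and saddle\<^sub>s: "is_saddle V Hs ?L (U s) (\<Lambda> s)"
    and rem: "lin_map V Vs (A\<^sub>2 s)" "lin_map V H (B\<^sub>2 s)" "f\<^sub>2 s \<in> Vs"
    and u: "U s \<in> V" and l: "\<Lambda> s \<in> Hs"
    using elim by blast+
  have u\<^sub>0: "u\<^sub>0 \<in> V" and \<mu>\<^sub>0: "\<mu>\<^sub>0 \<in> Hs"
    using stability.saddle\<^sub>0_conditions by blast+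
  have expansion: "?L v \<mu> = ?L\<^sub>0 v \<mu> + s * lagrangian pV pH A\<^sub>1 B\<^sub>1 f\<^sub>1 v \<mu>
      + lagrangian pV pH (A\<^sub>2 s) (B\<^sub>2 s) (f\<^sub>2 s) v \<mu>" if "v \<in> V" "\<mu> \<in> Hs" for v \<mu>
    using that rem(3) f\<^sub>0_mem f\<^sub>1_mem
    by (intro lagrangian_expansion lin_map_mem[OF A\<^sub>0_lin] lin_map_mem[OF A\<^sub>1_lin] lin_map_mem[OF rem(1)]
        lin_map_mem[OF B\<^sub>0_lin] lin_map_mem[OF B\<^sub>1_lin] lin_map_mem[OF rem(2)])
  show ?case
    using saddle_value_bracket[OF saddle\<^sub>0 saddle\<^sub>s] expansion[OF u \<mu>\<^sub>0] expansion[OF u\<^sub>0 l]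
      saddle_value[OF lin saddle\<^sub>s] saddle_value[OF A\<^sub>0_lin B\<^sub>0_lin f\<^sub>0_mem saddle\<^sub>0]
    by linarith
qed

lemma first_order_primal_tendsto:
  "((\<lambda>s. lagrangian pV pH A\<^sub>1 B\<^sub>1 f\<^sub>1 (U s) \<mu>\<^sub>0) \<longlongrightarrow> lagrangian pV pH A\<^sub>1 B\<^sub>1 f\<^sub>1 u\<^sub>0 \<mu>\<^sub>0) (at 0)"
proof -
  let ?L\<^sub>1 = "lagrangian pV pH A\<^sub>1 B\<^sub>1 f\<^sub>1"
  have u\<^sub>0: "u\<^sub>0 \<in> V" and \<mu>\<^sub>0: "\<mu>\<^sub>0 \<in> Hs"
    using stability.saddle\<^sub>0_conditions by blast+
  obtain K where K: "\<forall>\<^sub>F s in at 0. V.nrm (U s) \<le> K"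
    using stability.solution_bounded by blast
  define C where "C = \<bar>c\<^sub>A\<bar> / 2 * (V.nrm u\<^sub>0 + K) + V.dnrm f\<^sub>1 + H.dnrm \<mu>\<^sub>0 * \<bar>c\<^sub>B\<bar>"
  have "\<forall>\<^sub>F s in at 0. norm (?L\<^sub>1 (U s) \<mu>\<^sub>0 - ?L\<^sub>1 u\<^sub>0 \<mu>\<^sub>0) \<le> C * V.nrm (\<lambda>x. U s x - u\<^sub>0 x)"
    using stability.perturbed_conditions K
  proof eventually_elim
    case (elim s)
    let ?e = "\<lambda>x. U s x - u\<^sub>0 x"
    have u: "U s \<in> V" using elim by blast
    have e: "?e \<in> V" using u u\<^sub>0 by simp
    have "\<bar>pV (A\<^sub>1 ?e) (U s)\<bar> \<le> \<bar>c\<^sub>A\<bar> * V.nrm ?e * V.nrm (U s)"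
      by (rule operator_pair_bound[OF A\<^sub>1_lin A\<^sub>1_bounded e u])
    also have "\<dots> \<le> \<bar>c\<^sub>A\<bar> * V.nrm ?e * K"
      using elim e by (intro mult_left_mono) auto
    finally show ?case
      using lagrangian_primal_diff[OF A\<^sub>1_lin B\<^sub>1_lin f\<^sub>1_mem \<mu>\<^sub>0 u\<^sub>0 u]
        operator_pair_bound[OF A\<^sub>1_lin A\<^sub>1_bounded u\<^sub>0 e] V.dnrm_bound[OF f\<^sub>1_mem e]
        constraint_pair_bound[OF B\<^sub>1_lin B\<^sub>1_bounded \<mu>\<^sub>0 e]
      unfolding C_def by (simp add: algebra_simps abs_le_iff add_divide_distrib)
  qed
  then have "((\<lambda>s. ?L\<^sub>1 (U s) \<mu>\<^sub>0 - ?L\<^sub>1 u\<^sub>0 \<mu>\<^sub>0) \<longlongrightarrow> 0) (at 0)"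
    by (rule Lim_null_comparison) (rule tendsto_mult_right_zero[OF stability.solution_tendsto])
  then show ?thesis
    by (simp add: LIM_zero_iff)
qed

lemma first_order_dual_tendsto:
  "((\<lambda>s. lagrangian pV pH A\<^sub>1 B\<^sub>1 f\<^sub>1 u\<^sub>0 (\<Lambda> s)) \<longlongrightarrow> lagrangian pV pH A\<^sub>1 B\<^sub>1 f\<^sub>1 u\<^sub>0 \<mu>\<^sub>0) (at 0)"
proof -
  let ?L\<^sub>1 = "lagrangian pV pH A\<^sub>1 B\<^sub>1 f\<^sub>1"
  have u\<^sub>0: "u\<^sub>0 \<in> V" and \<mu>\<^sub>0: "\<mu>\<^sub>0 \<in> Hs"
    using stability.saddle\<^sub>0_conditions by blast+
  have "\<forall>\<^sub>F s in at 0. norm (?L\<^sub>1 u\<^sub>0 (\<Lambda> s) - ?L\<^sub>1 u\<^sub>0 \<mu>\<^sub>0)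
      \<le> H.dnrm (\<lambda>x. \<Lambda> s x - \<mu>\<^sub>0 x) * (\<bar>c\<^sub>B\<bar> * V.nrm u\<^sub>0)"
    using stability.perturbed_conditions
  proof eventually_elim
    case (elim s)
    then have "(\<lambda>x. \<Lambda> s x - \<mu>\<^sub>0 x) \<in> Hs" using \<mu>\<^sub>0 by blast
    then show ?case
      using lagrangian_dual_diff[OF B\<^sub>1_lin u\<^sub>0, of "\<Lambda> s" \<mu>\<^sub>0 A\<^sub>1 f\<^sub>1] elim \<mu>\<^sub>0
        constraint_pair_bound[OF B\<^sub>1_lin B\<^sub>1_bounded _ u\<^sub>0, of "\<lambda>x. \<Lambda> s x - \<mu>\<^sub>0 x"]
      by (simp add: mult.assoc)
  qed
  then have "((\<lambda>s. ?L\<^sub>1 u\<^sub>0 (\<Lambda> s) - ?L\<^sub>1 u\<^sub>0 \<mu>\<^sub>0) \<longlongrightarrow> 0) (at 0)"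
    by (rule Lim_null_comparison) (rule tendsto_mult_left_zero[OF stability.multiplier_tendsto])
  then show ?thesis
    by (simp add: LIM_zero_iff)
qed

lemma remainder_negligible:
  assumes "K \<ge> 0" and bounded: "\<forall>\<^sub>F s in at 0. v s \<in> V \<and> \<mu> s \<in> Hs \<and> V.nrm (v s) \<le> K \<and> H.dnrm (\<mu> s) \<le> K"
  shows "((\<lambda>s. lagrangian pV pH (A\<^sub>2 s) (B\<^sub>2 s) (f\<^sub>2 s) (v s) (\<mu> s) / s) \<longlongrightarrow> 0) (at 0)"
proof (rule Lim_null_comparison)
  define C where "C = K * K + K"
  show "\<forall>\<^sub>F s in at 0. norm (lagrangian pV pH (A\<^sub>2 s) (B\<^sub>2 s) (f\<^sub>2 s) (v s) (\<mu> s) / s)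
      \<le> C * (o\<^sub>A s / \<bar>s\<bar> + o\<^sub>f s / \<bar>s\<bar> + o\<^sub>B s / \<bar>s\<bar>)"
    using bounded remainder
  proof eventually_elim
    case (elim s)
    let ?n = "V.nrm (v s)" and ?m = "H.dnrm (\<mu> s)"
    have v: "v s \<in> V" and \<mu>: "\<mu> s \<in> Hs" and rem: "lin_map V Vs (A\<^sub>2 s)" "lin_map V H (B\<^sub>2 s)" "f\<^sub>2 s \<in> Vs"
      using elim by blast+
    have o: "o\<^sub>A s \<ge> 0" "o\<^sub>B s \<ge> 0" "o\<^sub>f s \<ge> 0"
      using remainder_small by (simp_all add: small_o_nonneg)
    have "\<bar>lagrangian pV pH (A\<^sub>2 s) (B\<^sub>2 s) (f\<^sub>2 s) (v s) (\<mu> s)\<bar>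
        \<le> (o\<^sub>A s / 2 * ?n + V.dnrm (f\<^sub>2 s) + ?m * o\<^sub>B s) * ?n"
      using elim v by (intro lagrangian_bound lin_map_mem[OF rem(1)] lin_map_mem[OF rem(2)] rem(3) \<mu>) auto
    also have "\<dots> \<le> (o\<^sub>A s / 2 * K + o\<^sub>f s + K * o\<^sub>B s) * K"
      using elim v \<mu> o \<open>K \<ge> 0\<close>
      by (intro mult_mono add_mono mult_left_mono mult_right_mono) auto
    also have "\<dots> = o\<^sub>A s * (K * K / 2) + o\<^sub>f s * K + o\<^sub>B s * (K * K)"
      by (simp add: algebra_simps)
    also have "\<dots> \<le> o\<^sub>A s * C + o\<^sub>f s * C + o\<^sub>B s * C"
      using o \<open>K \<ge> 0\<close> unfolding C_def by (intro add_mono mult_left_mono) auto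
    finally have "\<bar>lagrangian pV pH (A\<^sub>2 s) (B\<^sub>2 s) (f\<^sub>2 s) (v s) (\<mu> s)\<bar> / \<bar>s\<bar>
        \<le> (o\<^sub>A s * C + o\<^sub>f s * C + o\<^sub>B s * C) / \<bar>s\<bar>"
      by (rule divide_right_mono) simp
    then show ?case
      by (simp add: abs_divide add_divide_distrib algebra_simps)
  qed
  show "((\<lambda>s. C * (o\<^sub>A s / \<bar>s\<bar> + o\<^sub>f s / \<bar>s\<bar> + o\<^sub>B s / \<bar>s\<bar>)) \<longlongrightarrow> 0) (at 0)"
    using tendsto_add[OF tendsto_add[OF small_o_div_abs_tendsto small_o_div_abs_tendsto] small_o_div_abs_tendsto]
      remainder_small
    by (intro tendsto_mult_right_zero) simp
qed

theorem energy_derivative: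
  "((\<lambda>s. (energy pV (A\<^sub>s s) (f\<^sub>s s) (U s) - energy pV A\<^sub>0 f\<^sub>0 u\<^sub>0) / s)
     \<longlongrightarrow> lagrangian pV pH A\<^sub>1 B\<^sub>1 f\<^sub>1 u\<^sub>0 \<mu>\<^sub>0) (at 0)"
proof (rule difference_quotient_squeeze[OF energy_difference_bracket first_order_primal_tendsto
      first_order_dual_tendsto])
  obtain K\<^sub>U K\<^sub>\<Lambda> where K: "K\<^sub>U \<ge> 0" "K\<^sub>\<Lambda> \<ge> 0"
    "\<forall>\<^sub>F s in at 0. V.nrm (U s) \<le> K\<^sub>U" "\<forall>\<^sub>F s in at 0. H.dnrm (\<Lambda> s) \<le> K\<^sub>\<Lambda>"
    using stability.solution_bounded stability.multiplier_bounded by metis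
  define K where "K = K\<^sub>U + K\<^sub>\<Lambda> + V.nrm u\<^sub>0 + H.dnrm \<mu>\<^sub>0"
  have u\<^sub>0: "u\<^sub>0 \<in> V" and \<mu>\<^sub>0: "\<mu>\<^sub>0 \<in> Hs"
    using stability.saddle\<^sub>0_conditions by blast+
  then have K_ge: "K\<^sub>U \<le> K" "K\<^sub>\<Lambda> \<le> K" "V.nrm u\<^sub>0 \<le> K" "H.dnrm \<mu>\<^sub>0 \<le> K"
    using K(1,2) V.nrm_nonneg[OF u\<^sub>0] H.dnrm_nonneg[OF \<mu>\<^sub>0] unfolding K_def by linarith+
  then have "K \<ge> 0" using K by linarith
  have "\<forall>\<^sub>F s in at 0. U s \<in> V \<and> \<mu>\<^sub>0 \<in> Hs \<and> V.nrm (U s) \<le> K \<and> H.dnrm \<mu>\<^sub>0 \<le> K"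
    using stability.perturbed_conditions K(3)
  proof eventually_elim
    case (elim s)
    then show ?case using K_ge \<mu>\<^sub>0 by (intro conjI) (blast, blast, linarith, linarith)
  qed
  then show "((\<lambda>s. lagrangian pV pH (A\<^sub>2 s) (B\<^sub>2 s) (f\<^sub>2 s) (U s) \<mu>\<^sub>0 / s) \<longlongrightarrow> 0) (at 0)"
    by (rule remainder_negligible[OF \<open>K \<ge> 0\<close>])
  have "\<forall>\<^sub>F s in at 0. u\<^sub>0 \<in> V \<and> \<Lambda> s \<in> Hs \<and> V.nrm u\<^sub>0 \<le> K \<and> H.dnrm (\<Lambda> s) \<le> K"
    using stability.perturbed_conditions K(4)
  proof eventually_elim
    case (elim s)
    then show ?case using K_ge u\<^sub>0 by (intro conjI) (blast, blast, linarith, linarith)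
  qed
  then show "((\<lambda>s. lagrangian pV pH (A\<^sub>2 s) (B\<^sub>2 s) (f\<^sub>2 s) u\<^sub>0 (\<Lambda> s) / s) \<longlongrightarrow> 0) (at 0)"
    by (rule remainder_negligible[OF \<open>K \<ge> 0\<close>])
qed

end

section \<open>Pullback to the reference domain\<close>

lemma pullback_saddle:
  assumes setting': "saddle_setting V' ipV' Vs' pV' H' ipH' Hs' pH'"
    and setting: "saddle_setting V ipV Vs pV H ipH Hs pH"
    and bij_V: "bij_betw (\<lambda>v. v \<circ> \<phi>) V' V" and bij_Hs: "bij_betw (\<lambda>\<mu>. \<mu> \<circ> \<phi>) Hs' Hs"
    and problem': "lin_map V' Vs' A'" "lin_map V' H' B'" "f' \<in> Vs'"
      "is_saddle V' Hs' (lagrangian pV' pH' A' B' f') u' \<mu>'"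
    and problem: "lin_map V Vs A" "lin_map V H B" "f \<in> Vs"
    and A_pullback: "\<And>v z. v \<in> V' \<Longrightarrow> z \<in> V' \<Longrightarrow> pV' (A' v) z = pV (A (v \<circ> \<phi>)) (z \<circ> \<phi>)"
    and B_pullback: "\<And>\<mu> v. \<mu> \<in> Hs' \<Longrightarrow> v \<in> V' \<Longrightarrow> pH' \<mu> (B' v) = pH (\<mu> \<circ> \<phi>) (B (v \<circ> \<phi>))"
    and f_pullback: "\<And>v. v \<in> V' \<Longrightarrow> pV' f' v = pV f (v \<circ> \<phi>)"
  shows "is_saddle V Hs (lagrangian pV pH A B f) (u' \<circ> \<phi>) (\<mu>' \<circ> \<phi>)"
    and "energy pV A f (u' \<circ> \<phi>) = energy pV' A' f' u'"
proof -
  interpret S': saddle_setting V' ipV' Vs' pV' H' ipH' Hs' pH' by (rule setting')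
  interpret S: saddle_setting V ipV Vs pV H ipH Hs pH by (rule setting)
  have L: "lagrangian pV pH A B f (v \<circ> \<phi>) (\<mu> \<circ> \<phi>) = lagrangian pV' pH' A' B' f' v \<mu>"
    if "v \<in> V'" "\<mu> \<in> Hs'" for v \<mu>
  proof -
    have "v \<circ> \<phi> \<in> V" using bij_V that(1) by (auto simp: bij_betw_def)
    then show ?thesis
      using that A_pullback[of v v] B_pullback f_pullback
      by (simp add: S.lagrangian_eq[OF problem(1,3)] S'.lagrangian_eq[OF problem'(1,3)])
  qed
  show saddle: "is_saddle V Hs (lagrangian pV pH A B f) (u' \<circ> \<phi>) (\<mu>' \<circ> \<phi>)"
    using is_saddle_transfer[where L' = "lagrangian pV pH A B f", OF bij_V bij_Hs L problem'(4)] by simp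
  have "u' \<in> V'" "\<mu>' \<in> Hs'"
    using problem'(4) by (auto simp: is_saddle_def)
  then show "energy pV A f (u' \<circ> \<phi>) = energy pV' A' f' u'"
    using S.saddle_value[OF problem saddle] S'.saddle_value[OF problem'] L by simp
qed

theorem corollary2p2:
  fixes t0 t1 t :: real
    and \<Omega> :: "real \<Rightarrow> (real^'d) set"
    and V Vs H Hs :: "real \<Rightarrow> (real^'d \<Rightarrow> real) set"
    and ipV ipH pV pH :: "real \<Rightarrow> (real^'d \<Rightarrow> real) \<Rightarrow> (real^'d \<Rightarrow> real) \<Rightarrow> real"
    and A B :: "real \<Rightarrow> (real^'d \<Rightarrow> real) \<Rightarrow> (real^'d \<Rightarrow> real)"
    and f :: "real^'d \<Rightarrow> real"
    and cAlo cAhi cB :: real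
    and u lam :: "real \<Rightarrow> (real^'d \<Rightarrow> real)"
    and \<phi> \<phi>i :: "real \<Rightarrow> real^'d \<Rightarrow> real^'d"
    and A1 B1 :: "(real^'d \<Rightarrow> real) \<Rightarrow> (real^'d \<Rightarrow> real)"
    and A2 B2 :: "real \<Rightarrow> (real^'d \<Rightarrow> real) \<Rightarrow> (real^'d \<Rightarrow> real)"
    and f1 :: "real^'d \<Rightarrow> real"
    and f2 :: "real \<Rightarrow> real^'d \<Rightarrow> real"
    and oA oB oF :: "real \<Rightarrow> real"
  assumes t01: "t0 < t1"
    and dom: "\<And>\<tau>. \<tau> \<in> {t0<..<t1} \<Longrightarrow> open (\<Omega> \<tau>) \<and> connected (\<Omega> \<tau>)"
    and spV: "\<And>\<tau>. \<tau> \<in> {t0<..<t1} \<Longrightarrow> hilbert_fspace (V \<tau>) (ipV \<tau>)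
                 \<and> dual_fspace (V \<tau>) (ipV \<tau>) (Vs \<tau>) (pV \<tau>)"
    and spH: "\<And>\<tau>. \<tau> \<in> {t0<..<t1} \<Longrightarrow> hilbert_fspace (H \<tau>) (ipH \<tau>)
                 \<and> dual_fspace (H \<tau>) (ipH \<tau>) (Hs \<tau>) (pH \<tau>)"
    and supp: "\<And>\<tau>. \<tau> \<in> {t0<..<t1} \<Longrightarrow> supported_in (\<Omega> \<tau>) (V \<tau>) \<and> supported_in (\<Omega> \<tau>) (Vs \<tau>)
                 \<and> supported_in (\<Omega> \<tau>) (H \<tau>) \<and> supported_in (\<Omega> \<tau>) (Hs \<tau>)"
    and cA: "0 < cAlo" "cAlo \<le> cAhi"
    and A_lin: "\<And>\<tau>. \<tau> \<in> {t0<..<t1} \<Longrightarrow> lin_map (V \<tau>) (Vs \<tau>) (A \<tau>)"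
    and A_coer: "\<And>\<tau> w. \<tau> \<in> {t0<..<t1} \<Longrightarrow> w \<in> V \<tau> \<Longrightarrow>
                   pV \<tau> (A \<tau> w) w \<ge> cAlo * (fnorm (ipV \<tau>) w)\<^sup>2"
    and A_bdd: "\<And>\<tau> w. \<tau> \<in> {t0<..<t1} \<Longrightarrow> w \<in> V \<tau> \<Longrightarrow>
                   dual_norm (V \<tau>) (ipV \<tau>) (pV \<tau>) (A \<tau> w) \<le> cAhi * fnorm (ipV \<tau>) w"
    and B_lin: "\<And>\<tau>. \<tau> \<in> {t0<..<t1} \<Longrightarrow> lin_map (V \<tau>) (H \<tau>) (B \<tau>) \<and> B \<tau> ` V \<tau> = H \<tau>"
    and B_bdd: "\<And>\<tau> w. \<tau> \<in> {t0<..<t1} \<Longrightarrow> w \<in> V \<tau> \<Longrightarrow>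
                   fnorm (ipH \<tau>) (B \<tau> w) \<le> cB * fnorm (ipV \<tau>) w"
    and f_in: "\<And>\<tau>. \<tau> \<in> {t0<..<t1} \<Longrightarrow> f \<in> Vs \<tau>"
    and u_min: "\<And>\<tau>. \<tau> \<in> {t0<..<t1} \<Longrightarrow>
                  is_minimizer (eq_cone (V \<tau>) (B \<tau>)) (energy (pV \<tau>) (A \<tau>) f) (u \<tau>)"
    and saddle: "\<And>\<tau>. \<tau> \<in> {t0<..<t1} \<Longrightarrow>
                  is_saddle (V \<tau>) (Hs \<tau>) (lagrangian (pV \<tau>) (pH \<tau>) (A \<tau>) (B \<tau>) f) (u \<tau>) (lam \<tau>)"
    and t_in: "t \<in> {t0<..<t1}"
    and phi_inv: "\<And>s x. s \<in> {t0 - t..t1 - t} \<Longrightarrow> \<phi> s (\<phi>i s x) = x \<and> \<phi>i s (\<phi> s x) = x"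
    and phi_reg: "C1_W1inf_loc {t0 - t..t1 - t} \<phi>" "C1_W1inf_loc {t0 - t..t1 - t} \<phi>i"
    and phi_dom: "\<And>s. s \<in> {t0 - t<..<t1 - t} \<Longrightarrow> \<Omega> (t + s) = \<phi> s ` \<Omega> t"
    and pb_V: "pullback_unif {t0 - t<..<t1 - t} \<phi> (\<lambda>s. V (t + s)) (\<lambda>s. fnorm (ipV (t + s)))
                  (V t) (fnorm (ipV t))"
    and pb_Vs: "pullback_unif {t0 - t<..<t1 - t} \<phi> (\<lambda>s. Vs (t + s))
                  (\<lambda>s. dual_norm (V (t + s)) (ipV (t + s)) (pV (t + s)))
                  (Vs t) (dual_norm (V t) (ipV t) (pV t))"
    and pb_H: "pullback_unif {t0 - t<..<t1 - t} \<phi> (\<lambda>s. H (t + s)) (\<lambda>s. fnorm (ipH (t + s)))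
                  (H t) (fnorm (ipH t))"
    and pb_Hs: "pullback_unif {t0 - t<..<t1 - t} \<phi> (\<lambda>s. Hs (t + s))
                  (\<lambda>s. dual_norm (H (t + s)) (ipH (t + s)) (pH (t + s)))
                  (Hs t) (dual_norm (H t) (ipH t) (pH t))"
    and A_exp: "\<And>s v z. s \<in> {t0 - t<..<t1 - t} \<Longrightarrow> v \<in> V (t + s) \<Longrightarrow> z \<in> V (t + s) \<Longrightarrow>
                  pV (t + s) (A (t + s) v) z
                = pV t (\<lambda>x. A t (v \<circ> \<phi> s) x + s * A1 (v \<circ> \<phi> s) x + A2 s (v \<circ> \<phi> s) x) (z \<circ> \<phi> s)"
    and A1_bdd: "lin_map (V t) (Vs t) A1"
                "\<exists>C. \<forall>w\<in>V t. dual_norm (V t) (ipV t) (pV t) (A1 w) \<le> C * fnorm (ipV t) w"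
    and A2_bdd: "\<And>s. s \<in> {t0 - t<..<t1 - t} \<Longrightarrow> lin_map (V t) (Vs t) (A2 s)
                  \<and> (\<exists>C. \<forall>w\<in>V t. dual_norm (V t) (ipV t) (pV t) (A2 s w) \<le> C * fnorm (ipV t) w)"
    and A2_small: "small_o oA"
                  "\<And>s w. s \<in> {t0 - t<..<t1 - t} \<Longrightarrow> w \<in> V t \<Longrightarrow>
                     dual_norm (V t) (ipV t) (pV t) (A2 s w) \<le> oA s * fnorm (ipV t) w"
    and B_exp: "\<And>s \<mu> v. s \<in> {t0 - t<..<t1 - t} \<Longrightarrow> \<mu> \<in> Hs (t + s) \<Longrightarrow> v \<in> V (t + s) \<Longrightarrow>
                  pH (t + s) \<mu> (B (t + s) v)
                = pH t (\<mu> \<circ> \<phi> s) (\<lambda>x. B t (v \<circ> \<phi> s) x + s * B1 (v \<circ> \<phi> s) x + B2 s (v \<circ> \<phi> s) x)"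
    and B1_bdd: "lin_map (V t) (H t) B1"
                "\<exists>C. \<forall>w\<in>V t. fnorm (ipH t) (B1 w) \<le> C * fnorm (ipV t) w"
    and B2_bdd: "\<And>s. s \<in> {t0 - t<..<t1 - t} \<Longrightarrow> lin_map (V t) (H t) (B2 s)
                  \<and> (\<exists>C. \<forall>w\<in>V t. fnorm (ipH t) (B2 s w) \<le> C * fnorm (ipV t) w)"
    and Bs_surj: "\<And>s. s \<in> {t0 - t<..<t1 - t} \<Longrightarrow>
                  (\<lambda>w x. B t w x + s * B1 w x + B2 s w x) ` V t = H t"
    and B2_small: "small_o oB"
                  "\<And>s w. s \<in> {t0 - t<..<t1 - t} \<Longrightarrow> w \<in> V t \<Longrightarrow>
                     fnorm (ipH t) (B2 s w) \<le> oB s * fnorm (ipV t) w"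
    and f_exp: "\<And>s v. s \<in> {t0 - t<..<t1 - t} \<Longrightarrow> v \<in> V (t + s) \<Longrightarrow>
                  pV (t + s) f v = pV t (\<lambda>x. f x + s * f1 x + f2 s x) (v \<circ> \<phi> s)"
    and f1_in: "f1 \<in> Vs t"
    and f2_in: "\<And>s. s \<in> {t0 - t<..<t1 - t} \<Longrightarrow> f2 s \<in> Vs t"
    and f2_small: "small_o oF"
                  "\<And>s. s \<in> {t0 - t<..<t1 - t} \<Longrightarrow> dual_norm (V t) (ipV t) (pV t) (f2 s) \<le> oF s"
  shows "(\<forall>s\<in>{t0 - t<..<t1 - t}.
            bij_betw (\<lambda>\<mu>. \<mu> \<circ> \<phi> s) (eq_cone_dual (Hs (t + s))) (eq_cone_dual (Hs t)))
       \<and> ((\<lambda>s. (energy (pV (t + s)) (A (t + s)) f (u (t + s)) - energy (pV t) (A t) f (u t)) / s)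
            \<longlongrightarrow> pV t (\<lambda>x. (1/2) * A1 (u t) x - f1 x) (u t) - pH t (lam t) (B1 (u t))) (at 0)"
proof -
  \<comment> \<open>The saddle points are given.\<close>
  let ?I = "{t0 - t<..<t1 - t}"
  let ?A = "\<lambda>s w x. A t w x + s * A1 w x + A2 s w x" and ?B = "\<lambda>s w x. B t w x + s * B1 w x + B2 s w x"
    and ?f = "\<lambda>s x. f x + s * f1 x + f2 s x"
  have near_0: "\<forall>\<^sub>F s in at 0. s \<in> ?I"
    using t_in by (intro eventually_at_in_open') auto
  have shifted: "t + s \<in> {t0<..<t1}" if "s \<in> ?I" for s
    using that by auto
  have setting: "saddle_setting (V \<tau>) (ipV \<tau>) (Vs \<tau>) (pV \<tau>) (H \<tau>) (ipH \<tau>) (Hs \<tau>) (pH \<tau>)"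
    if "\<tau> \<in> {t0<..<t1}" for \<tau>
    using spV[OF that] spH[OF that]
    by (simp add: saddle_setting_def dual_hspace_def hspace_def dual_hspace_axioms_def)
  interpret t: saddle_setting "V t" "ipV t" "Vs t" "pV t" "H t" "ipH t" "Hs t" "pH t"
    by (rule setting[OF t_in])
  have pullback_V: "bij_betw (\<lambda>v. v \<circ> \<phi> s) (V (t + s)) (V t)"
    and pullback_Hs: "bij_betw (\<lambda>\<mu>. \<mu> \<circ> \<phi> s) (Hs (t + s)) (Hs t)" if "s \<in> ?I" for s
    using pb_V pb_Hs that by (simp_all add: pullback_unif_def)
  have perturbed_problem: "lin_map (V t) (Vs t) (?A s)" "lin_map (V t) (H t) (?B s)" "?f s \<in> Vs t"
    if "s \<in> ?I" for s
    using A2_bdd[OF that] B2_bdd[OF that] f2_in[OF that] A_lin[OF t_in] A1_bdd(1) B_lin[OF t_in] B1_bdd(1)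
      f_in[OF t_in] f1_in
    by (auto intro!: lin_map_combination[OF t.V.dual_fsubspace] lin_map_combination[OF t.H.fsubspace])
  have transported: "\<forall>\<^sub>F s in at 0.
      is_saddle (V t) (Hs t) (lagrangian (pV t) (pH t) (?A s) (?B s) (?f s)) (u (t + s) \<circ> \<phi> s) (lam (t + s) \<circ> \<phi> s)
      \<and> energy (pV t) (?A s) (?f s) (u (t + s) \<circ> \<phi> s) = energy (pV (t + s)) (A (t + s)) f (u (t + s))"
    using near_0
  proof eventually_elim
    case (elim s)
    note \<tau> = shifted[OF elim]
    show ?case
      using pullback_saddle[where \<phi> = "\<phi> s" and A = "?A s" and B = "?B s" and f = "?f s",
          OF setting[OF \<tau>] setting[OF t_in] pullback_V[OF elim] pullback_Hs[OF elim]
          A_lin[OF \<tau>] conjunct1[OF B_lin[OF \<tau>]] f_in[OF \<tau>] saddle[OF \<tau>] perturbed_problem[OF elim]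
          A_exp[OF elim] B_exp[OF elim] f_exp[OF elim]]
      by blast
  qed
  obtain c\<^sub>A where c\<^sub>A: "\<And>w. w \<in> V t \<Longrightarrow> dual_norm (V t) (ipV t) (pV t) (A1 w) \<le> c\<^sub>A * fnorm (ipV t) w"
    using A1_bdd(2) by blast
  obtain c\<^sub>B where c\<^sub>B: "\<And>w. w \<in> V t \<Longrightarrow> fnorm (ipH t) (B1 w) \<le> c\<^sub>B * fnorm (ipV t) w"
    using B1_bdd(2) by blast
  interpret expansion: saddle_expansion "V t" "ipV t" "Vs t" "pV t" "H t" "ipH t" "Hs t" "pH t"
    "A t" A1 "B t" B1 A2 B2 f f1 "u t" "lam t" f2 "\<lambda>s. u (t + s) \<circ> \<phi> s" "\<lambda>s. lam (t + s) \<circ> \<phi> s"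
    cAlo cAhi c\<^sub>A c\<^sub>B oA oB oF
  proof unfold_locales
    show "\<forall>\<^sub>F s in at 0. lin_map (V t) (Vs t) (A2 s) \<and> lin_map (V t) (H t) (B2 s) \<and> f2 s \<in> Vs t
        \<and> (\<forall>v\<in>V t. dual_norm (V t) (ipV t) (pV t) (A2 s v) \<le> oA s * fnorm (ipV t) v
             \<and> fnorm (ipH t) (B2 s v) \<le> oB s * fnorm (ipV t) v)
        \<and> dual_norm (V t) (ipV t) (pV t) (f2 s) \<le> oF s"
      using near_0 by eventually_elim (simp add: A2_bdd B2_bdd f2_in A2_small(2) B2_small(2) f2_small(2))
    show "\<forall>\<^sub>F s in at 0. is_saddle (V t) (Hs t) (lagrangian (pV t) (pH t) (?A s) (?B s) (?f s))
        (u (t + s) \<circ> \<phi> s) (lam (t + s) \<circ> \<phi> s)"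
      using transported by eventually_elim simp
  qed (fact A_lin[OF t_in] conjunct1[OF B_lin[OF t_in]] f_in[OF t_in] cA(1) A_coer[OF t_in] A_bdd[OF t_in]
      conjunct2[OF B_lin[OF t_in]] saddle[OF t_in] A1_bdd(1) c\<^sub>A B1_bdd(1) c\<^sub>B f1_in
      A2_small(1) B2_small(1) f2_small(1))+
  have "((\<lambda>s. (energy (pV (t + s)) (A (t + s)) f (u (t + s)) - energy (pV t) (A t) f (u t)) / s)
      \<longlongrightarrow> lagrangian (pV t) (pH t) A1 B1 f1 (u t) (lam t)) (at 0)"
    using expansion.energy_derivative transported
    by (rule Lim_transform_eventually[OF _ eventually_mono]) simp
  moreover have "lagrangian (pV t) (pH t) A1 B1 f1 (u t) (lam t)
      = pV t (\<lambda>x. (1/2) * A1 (u t) x - f1 x) (u t) - pH t (lam t) (B1 (u t))"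
    by (simp add: lagrangian_def energy_def)
  ultimately show ?thesis
    using pullback_Hs by (simp add: eq_cone_dual_def)
qed

end
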